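(* Suppose the reduced gyroscopic two-form is exact, $\mathbf f=d\mathbf a$ with $\mathbf a=\sum_ia_i(x)dx_i$, and let $l_1(x,\dot x)=\frac12\sum g_{ij}\dot x_i\dot x_j+\sum_ia_i\dot x_i-v(x)$. Let $\mathcal N(x)$ be a nowhere vanishing function on $S$, $d\tau=\mathcal N(x)dt$, $x'=dx/d\tau$, and $l_1^*(x,x')=\frac12\sum\mathcal N^2g_{ij}x'_ix'_j+\sum_i\mathcal N a_ix'_i-v(x)$. Then the equations $$\frac{d}{dt}\frac{\partial l_1}{\partial\dot x_i}=\frac{\partial l_1}{\partial x_i}+\sum_{k,l,j=1}^nC^k_{ij}(x)g_{kl}\dot x_l\dot x_j,\qquad i=1,\dots,n,$$ after the time reparametrization $d\tau=\mathcal N dt$ become the Lagrangian system $\frac{d}{d\tau}\frac{\partial l_1^*}{\partial x'_i}=\frac{\partial l_1^*}{\partial x_i}$ ($i=1,\dots,n$) if and only if (a) $\mathcal N$ is a Chaplygin reducing multiplier for the corresponding system without the linear term, i.e. the equations $\frac{d}{dt}\frac{\partial l}{\partial\dot x_i}=\frac{\partial l}{\partial x_i}+\sum_{k,l,j}C^k_{ij}g_{kl}\dot x_l\dot x_j$ with $l=\frac12\sum g_{ij}\dot x_i\dot x_j-v$ become, after $d\tau=\mathcal N dt$, the Lagrangian system $\frac{d}{d\tau}\frac{\partial l^*}{\partial x'_i}=\frac{\partial l^*}{\partial x_i}$ with $l^*(x,x')=\frac12\sum\mathcal N^2g_{ij}x'_ix'_j-v(x)$; and (b) $d\mathcal N\wedge\mathbf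 a=0$, i.e. $a_j\frac{\partial\mathcal N}{\partial x_i}=a_i\frac{\partial\mathcal N}{\partial x_j}$ for all $i,j$.
   Context: Setting: $S$ ($\dim S=n$) is the base of a gyroscopic $G$–Chaplygin system $(Q,L,\mathcal D,G,\mathbf F)$: $G$ acts freely on $Q$, $\pi\colon Q\to S=Q/G$, $L=\frac12\mathbf G(\dot q,\dot q)-V$ with $G$-invariant $\mathbf G,V$, $\mathbf F$ a $G$-invariant two-form, $\mathcal D$ a $G$-invariant distribution complementary to $\ker d\pi$. Reduced data: metric $\mathbf g(X,Y)=\mathbf G(X^h,Y^h)$ (local components $g_{ij}$), potential $v$ with $v\circ\pi=V$, two-form $\mathbf f(X,Y)=\mathbf F(X^h,Y^h)$, where $X^h\in\mathcal D$ is the horizontal lift; $\Sigma(X,Y,Z)=\mathbf G(X^h,B(Y^h,Z^h))$ with $B(X,Y)=-A([X^h,Y^h])$ the curvature ($A$ the vertical projection along $\mathcal D$), and the $(1,2)$-tensor $\mathbf C$ defined by $\Sigma(X,Y,Z)=\mathbf g(X,\mathbf C(Y,Z))$, with local components $\mathbf C(\partial_i,\partial_j)=\sum_kC^k_{ij}\partial_k$. Everything is in local coordinates $x=(x_1,\dots,x_n)$ on $S$; "the equations become" means that $t\mapsto x(t)$ solves the first system iff $\tau\mapsto x(t(\tau))$ solves the second. *)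

theory Defs
  imports "HOL-Analysis.Analysis"
begin

text \<open>Local coordinates x = (x_1,...,x_n) on an open chart domain U of S are modelled
  as vectors of type real^'n. Positions and velocities are both real^'n.\<close>

definition pd :: "(real^'n \<Rightarrow> real) \<Rightarrow> real^'n \<Rightarrow> 'n \<Rightarrow> real" where
  "pd f x i = deriv (\<lambda>s. f (x + s *\<^sub>R axis i 1)) 0"

text \<open>Smoothness (C-infinity) on U: there is a family D of functions indexed by lists of
  coordinate directions, D [] = f on U, and every D ds is (Frechet) differentiable at every
  point of U with partial derivatives D (i # ds).\<close>
definition smooth_on :: "(real^'n) set \<Rightarrow> (real^'n \<Rightarrow> real) \<Rightarrow> bool" where
  "smooth_on U f \<longleftrightarrow>
     (\<exists>D :: 'n list \<Rightarrow> real^'n \<Rightarrow> real.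
        (\<forall>x\<in>U. D [] x = f x) \<and>
        (\<forall>ds. \<forall>x\<in>U. (D ds has_derivative (\<lambda>h. \<Sum>i\<in>UNIV. h $ i * D (i # ds) x)) (at x)))"

definition pdq :: "(real^'n \<Rightarrow> real^'n \<Rightarrow> real) \<Rightarrow> real^'n \<Rightarrow> real^'n \<Rightarrow> 'n \<Rightarrow> real" where
  "pdq L q p i = pd (\<lambda>q'. L q' p) q i"

definition pdp :: "(real^'n \<Rightarrow> real^'n \<Rightarrow> real) \<Rightarrow> real^'n \<Rightarrow> real^'n \<Rightarrow> 'n \<Rightarrow> real" where
  "pdp L q p i = pd (\<lambda>p'. L q p') p i"

definition EL_solution ::
  "(real^'n \<Rightarrow> real^'n \<Rightarrow> real) \<Rightarrow> (real^'n \<Rightarrow> real^'n \<Rightarrow> 'n \<Rightarrow> real)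
     \<Rightarrow> real set \<Rightarrow> (real \<Rightarrow> real^'n) \<Rightarrow> bool" where
  "EL_solution L F I x \<longleftrightarrow>
     (\<forall>t\<in>I. x differentiable at t) \<and>
     (\<forall>t\<in>I. \<forall>i.
        ((\<lambda>s. pdp L (x s) (vector_derivative x (at s)) i) has_real_derivative
           (pdq L (x t) (vector_derivative x (at t)) i + F (x t) (vector_derivative x (at t)) i))
        (at t))"

text \<open>"The equations d/dt dL/dxdot = dL/dx + F become, after d tau = N dt, the Lagrangian
  system with Lagrangian Ls": for every open interval I, every curve x in U on I, every
  tau = sigma(t) with d sigma/dt = N(x(t)), and y the curve x expressed in the time tau
  (y(sigma t) = x t), x solves the first system on I iff y solves the Lagrangian system of Ls
  on sigma ` I.\<close>
definition becomes ::
  "(real^'n) set \<Rightarrow> (real^'n \<Rightarrow> real) \<Rightarrow> (real^'n \<Rightarrow> real^'n \<Rightarrow> real)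
     \<Rightarrow> (real^'n \<Rightarrow> real^'n \<Rightarrow> 'n \<Rightarrow> real) \<Rightarrow> (real^'n \<Rightarrow> real^'n \<Rightarrow> real) \<Rightarrow> bool" where
  "becomes U N L F Ls \<longleftrightarrow>
     (\<forall>(I :: real set) (x :: real \<Rightarrow> real^'n) (\<sigma> :: real \<Rightarrow> real) (y :: real \<Rightarrow> real^'n).
        is_interval I \<and> open I \<and> x ` I \<subseteq> U \<and>
        (\<forall>t\<in>I. (\<sigma> has_real_derivative N (x t)) (at t)) \<and>
        (\<forall>t\<in>I. y (\<sigma> t) = x t)
        \<longrightarrow> (EL_solution L F I x \<longleftrightarrow> EL_solution Ls (\<lambda>_ _ _. 0) (\<sigma> ` I) y))"

text \<open>Gyroscopic force term: sum_{k,l,j} C^k_{ij}(x) g_{kl}(x) xdot_l xdot_j,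
  with C x k i j = C^k_{ij}(x) and g x i j = g_{ij}(x).\<close>
definition gyro_force ::
  "(real^'n \<Rightarrow> 'n \<Rightarrow> 'n \<Rightarrow> 'n \<Rightarrow> real) \<Rightarrow> (real^'n \<Rightarrow> 'n \<Rightarrow> 'n \<Rightarrow> real)
     \<Rightarrow> real^'n \<Rightarrow> real^'n \<Rightarrow> 'n \<Rightarrow> real" where
  "gyro_force C g q p i = (\<Sum>k\<in>UNIV. \<Sum>l\<in>UNIV. \<Sum>j\<in>UNIV. C q k i j * g q k l * p $ l * p $ j)"

definition lag1 ::
  "(real^'n \<Rightarrow> 'n \<Rightarrow> 'n \<Rightarrow> real) \<Rightarrow> (real^'n \<Rightarrow> 'n \<Rightarrow> real) \<Rightarrow> (real^'n \<Rightarrow> real)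
     \<Rightarrow> real^'n \<Rightarrow> real^'n \<Rightarrow> real" where
  "lag1 g a v q p = (1/2) * (\<Sum>i\<in>UNIV. \<Sum>j\<in>UNIV. g q i j * p $ i * p $ j)
                    + (\<Sum>i\<in>UNIV. a q i * p $ i) - v q"

definition lag1_star ::
  "(real^'n \<Rightarrow> real) \<Rightarrow> (real^'n \<Rightarrow> 'n \<Rightarrow> 'n \<Rightarrow> real) \<Rightarrow> (real^'n \<Rightarrow> 'n \<Rightarrow> real)
     \<Rightarrow> (real^'n \<Rightarrow> real) \<Rightarrow> real^'n \<Rightarrow> real^'n \<Rightarrow> real" where
  "lag1_star N g a v q p = (1/2) * (\<Sum>i\<in>UNIV. \<Sum>j\<in>UNIV. (N q)^2 * g q i j * p $ i * p $ j)
                    + (\<Sum>i\<in>UNIV. N q * a q i * p $ i) - v q"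

definition chaplygin_multiplier ::
  "(real^'n) set \<Rightarrow> (real^'n \<Rightarrow> 'n \<Rightarrow> 'n \<Rightarrow> real) \<Rightarrow> (real^'n \<Rightarrow> real)
     \<Rightarrow> (real^'n \<Rightarrow> 'n \<Rightarrow> 'n \<Rightarrow> 'n \<Rightarrow> real) \<Rightarrow> (real^'n \<Rightarrow> real) \<Rightarrow> bool" where
  "chaplygin_multiplier U g v C N \<longleftrightarrow>
     becomes U N (lag1 g (\<lambda>_ _. 0) v) (gyro_force C g) (lag1_star N g (\<lambda>_ _. 0) v)"

end

theory Submission
  imports Defs
begin

text \<open>
  Under the time change \<open>d\<tau> = N dt\<close>, a curve solves the Euler--Lagrange equations of
  \<open>l\<^sub>1\<^sup>*\<close> if and only if, in the original time, it solves those of \<open>l\<^sub>1\<close> with the extra force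
  \<open>(\<partial>\<^sub>iN / N) (p \<cdot> x') - (N' / N) p\<^sub>i\<close>, where \<open>p\<close> is the momentum of \<open>l\<^sub>1\<close> and
  \<open>N' = dN(x')\<close>: both systems are momentum balances and the time change only rescales the
  momentum by \<open>N\<close>. Since every initial position and velocity is attained by a local solution
  (Picard--Lindeloef, after solving for the accelerations by Cramer's rule), the two systems
  correspond exactly when the gyroscopic force agrees with this extra force at every point of
  the phase space. The linear term \<open>a\<close> contributes \<open>\<Sum>\<^sub>j (\<partial>\<^sub>iN a\<^sub>j - \<partial>\<^sub>jN a\<^sub>i) x'\<^sub>j / N\<close>
  to the extra force, which is odd in the velocity, while everything else is even; so the identity
  splits into the Chaplygin condition for the system without \<open>a\<close> and \<open>dN \<and> a = 0\<close>.
\<close>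

lemma has_real_derivative_cong_open:
  assumes "open S" "t \<in> S" "\<And>s. s \<in> S \<Longrightarrow> f s = g s"
  shows "(f has_real_derivative X) (at t) \<longleftrightarrow> (g has_real_derivative X) (at t)"
  using assms by (intro DERIV_cong_ev refl eventually_nhds_in_open[THEN eventually_mono]) auto

lemma has_real_derivative_mult_left_iff:
  assumes m: "(m has_real_derivative m') (at t)" and S: "open S" "t \<in> S"
    and nonzero: "\<And>s. s \<in> S \<Longrightarrow> m s \<noteq> 0"
  shows "((\<lambda>s. m s * f s) has_real_derivative Y) (at t)
    \<longleftrightarrow> (f has_real_derivative (Y - m' * f t) / m t) (at t)"
proof
  assume prod: "((\<lambda>s. m s * f s) has_real_derivative Y) (at t)"
  have eq: "(Y * m t - m t * f t * m') / (m t * m t) = (Y - m' * f t) / m t"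
    using nonzero[OF S(2)] by (simp add: field_simps)
  from DERIV_divide[OF prod m nonzero[OF S(2)]]
  have "((\<lambda>s. m s * f s / m s) has_real_derivative (Y - m' * f t) / m t) (at t)"
    unfolding eq .
  then show "(f has_real_derivative (Y - m' * f t) / m t) (at t)"
    using has_real_derivative_cong_open[OF S, of "\<lambda>s. m s * f s / m s" f] nonzero by simp
next
  assume "(f has_real_derivative (Y - m' * f t) / m t) (at t)"
  from DERIV_mult[OF m this]
  show "((\<lambda>s. m s * f s) has_real_derivative Y) (at t)"
    using nonzero[OF S(2)] by (simp add: field_simps)
qed

lemma has_vector_derivative_integral_equation:
  fixes f :: "real \<Rightarrow> 'a::banach"
  assumes f: "continuous_on {a..b} f" and t: "t \<in> {a<..<b}"
    and z: "\<And>s. s \<in> {a<..<b} \<Longrightarrow> z s = c + integral {a..s} f"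
  shows "(z has_vector_derivative f t) (at t)"
proof -
  have "((\<lambda>s. integral {a..s} f) has_vector_derivative f t) (at t within {a..b})"
    using f t by (intro integral_has_vector_derivative) auto
  then have "((\<lambda>s. integral {a..s} f) has_vector_derivative f t) (at t)"
    using t by (subst (asm) at_within_interior[of t]) auto
  then have "((\<lambda>s. c + integral {a..s} f) has_vector_derivative f t) (at t)"
    by (auto intro!: derivative_eq_intros)
  then show ?thesis
    by (rule has_vector_derivative_transform_within_open[of _ _ _ "{a<..<b}"]) (use t z in auto)
qed

lemma exists_antiderivative:
  fixes f :: "real \<Rightarrow> real"
  assumes "continuous_on {a..b} f"
  shows "\<exists>F. \<forall>t\<in>{a<..<b}. (F has_real_derivative f t) (at t)"
proof (intro exI ballI)
  fix t assume "t \<in> {a<..<b}"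
  from has_vector_derivative_integral_equation[OF assms this, of "\<lambda>s. integral {a..s} f" 0]
  show "((\<lambda>s. integral {a..s} f) has_real_derivative f t) (at t)"
    by (simp add: has_real_derivative_iff_has_vector_derivative)
qed

lemma has_vector_derivative_bounded_linear:
  assumes "bounded_linear f" "(z has_vector_derivative z') F"
  shows "((\<lambda>t. f (z t)) has_vector_derivative f z') F"
  using bounded_linear.has_derivative[OF assms(1) assms(2)[unfolded has_vector_derivative_def]]
  by (simp add: has_vector_derivative_def linear_scale[OF bounded_linear.linear[OF assms(1)]])

lemma has_derivative_vec_nth [derivative_intros]:
  "(f has_derivative f') F \<Longrightarrow> ((\<lambda>x. f x $ i) has_derivative (\<lambda>h. f' h $ i)) F"
  by (rule bounded_linear.has_derivative[OF bounded_linear_vec_nth])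

section \<open>Local Lipschitz continuity at a point\<close>

definition locally_lipschitz_at :: "'a::metric_space \<Rightarrow> ('a \<Rightarrow> 'b::metric_space) \<Rightarrow> bool" where
  "locally_lipschitz_at z f \<longleftrightarrow> (\<exists>e>0. \<exists>L. L-lipschitz_on (cball z e) f)"

lemma locally_lipschitz_atI: "e > 0 \<Longrightarrow> L-lipschitz_on (cball z e) f \<Longrightarrow> locally_lipschitz_at z f"
  unfolding locally_lipschitz_at_def by blast

lemma lipschitz_on_cball_shrink:
  "L-lipschitz_on (cball z e) f \<Longrightarrow> e' \<le> e \<Longrightarrow> L-lipschitz_on (cball z e') f"
  by (erule lipschitz_on_subset) auto

lemma locally_lipschitz_at_common_radius:
  assumes "finite S" "\<And>i. i \<in> S \<Longrightarrow> locally_lipschitz_at z (f i)"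
  shows "\<exists>e>0. \<exists>L. \<forall>i\<in>S. (L i)-lipschitz_on (cball z e) (f i)"
  using assms
proof (induction S rule: finite_induct)
  case empty
  show ?case by (auto intro: zero_less_one)
next
  case (insert i S)
  then obtain e L where e: "e > 0" and L: "\<And>j. j \<in> S \<Longrightarrow> (L j)-lipschitz_on (cball z e) (f j)"
    by blast
  obtain e' L' where e': "e' > 0" and L': "L'-lipschitz_on (cball z e') (f i)"
    using insert.prems[of i] unfolding locally_lipschitz_at_def by blast
  have "((L(i := L')) j)-lipschitz_on (cball z (min e e')) (f j)" if "j \<in> insert i S" for j
  proof (cases "j = i")
    case True
    then show ?thesis
      using lipschitz_on_cball_shrink[OF L', of "min e e'"] by simp
  next
    case False
    then show ?thesis
      using lipschitz_on_cball_shrink[OF L[of j], of "min e e'"] that by simp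
  qed
  moreover have "min e e' > 0"
    using e e' by simp
  ultimately show ?case
    by blast
qed

lemma locally_lipschitz_at_pair_common_radius:
  assumes "locally_lipschitz_at z f" "locally_lipschitz_at z g"
  obtains e L M where "e > 0" "L-lipschitz_on (cball z e) f" "M-lipschitz_on (cball z e) g"
proof -
  obtain e1 e2 L M where "e1 > 0" "L-lipschitz_on (cball z e1) f"
    and "e2 > 0" "M-lipschitz_on (cball z e2) g"
    using assms unfolding locally_lipschitz_at_def by blast
  then show ?thesis
    using that[of "min e1 e2" L M] lipschitz_on_cball_shrink[of L z e1 f "min e1 e2"]
      lipschitz_on_cball_shrink[of M z e2 g "min e1 e2"] by simp
qed

lemma lipschitz_on_cball_dist_centre:
  assumes "L-lipschitz_on (cball z e) f" "y \<in> cball z e"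
  shows "dist (f y) (f z) \<le> L * e"
proof -
  have "0 \<le> e"
    using assms(2) zero_le_dist[of z y] by (simp only: mem_cball)
  then have "z \<in> cball z e"
    by simp
  then have "dist (f y) (f z) \<le> L * dist y z"
    by (rule lipschitz_onD[OF assms])
  also have "\<dots> \<le> L * e"
    using assms(2) lipschitz_on_nonneg[OF assms(1)] by (intro mult_left_mono) (auto simp: dist_commute)
  finally show ?thesis .
qed

lemma lipschitz_on_cball_bounded:
  fixes f :: "'a::metric_space \<Rightarrow> 'b::real_normed_vector"
  assumes "L-lipschitz_on (cball z e) f" "y \<in> cball z e"
  shows "norm (f y) \<le> norm (f z) + L * e"
  using lipschitz_on_cball_dist_centre[OF assms] norm_triangle_sub[of "f y" "f z"]
  by (simp add: dist_norm)

lemma lipschitz_on_imp_locally_lipschitz_at: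
  "L-lipschitz_on UNIV f \<Longrightarrow> locally_lipschitz_at z f"
  by (rule locally_lipschitz_atI[of 1]) (auto intro: lipschitz_on_subset)

lemma bounded_linear_imp_locally_lipschitz_at:
  assumes "bounded_linear f"
  shows "locally_lipschitz_at z f"
proof -
  obtain B where "B-lipschitz_on UNIV f"
    using bounded_linear.lipschitz_boundE[OF assms] by metis
  then show ?thesis
    by (rule lipschitz_on_imp_locally_lipschitz_at)
qed

lemma locally_lipschitz_at_const: "locally_lipschitz_at z (\<lambda>_. c)"
  by (rule lipschitz_on_imp_locally_lipschitz_at[OF lipschitz_on_constant])

lemma locally_lipschitz_at_compose:
  assumes f: "locally_lipschitz_at (\<phi> z) f" and \<phi>: "locally_lipschitz_at z \<phi>"
  shows "locally_lipschitz_at z (\<lambda>y. f (\<phi> y))"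
proof -
  obtain e1 L1 where e1: "e1 > 0" and L1: "L1-lipschitz_on (cball z e1) \<phi>"
    using \<phi> unfolding locally_lipschitz_at_def by blast
  obtain e2 L2 where e2: "e2 > 0" and L2: "L2-lipschitz_on (cball (\<phi> z) e2) f"
    using f unfolding locally_lipschitz_at_def by blast
  have L1_nonneg: "L1 \<ge> 0"
    using lipschitz_on_nonneg[OF L1] .
  define e where "e = min e1 (e2 / (L1 + 1))"
  have e: "e > 0" "e \<le> e1"
    unfolding e_def using e1 e2 L1_nonneg by auto
  have "\<phi> y \<in> cball (\<phi> z) e2" if "y \<in> cball z e" for y
  proof -
    have "z \<in> cball z e1" "y \<in> cball z e1"
      using that e e1 by auto
    then have "dist (\<phi> z) (\<phi> y) \<le> L1 * dist z y"
      by (rule lipschitz_onD[OF L1])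
    also have "\<dots> \<le> L1 * e"
      using that L1_nonneg by (intro mult_left_mono) auto
    also have "\<dots> \<le> (L1 + 1) * (e2 / (L1 + 1))"
      unfolding e_def using L1_nonneg e1 e2 by (intro mult_mono) auto
    finally show ?thesis
      using L1_nonneg by simp
  qed
  then have "(L2 * L1)-lipschitz_on (cball z e) (\<lambda>y. f (\<phi> y))"
    using lipschitz_on_cball_shrink[OF L1 e(2)] L2
    by (intro lipschitz_on_compose2) (auto intro: lipschitz_on_subset)
  then show ?thesis
    using e(1) by (rule locally_lipschitz_atI[rotated])
qed

lemma locally_lipschitz_at_add:
  fixes f g :: "'a::metric_space \<Rightarrow> 'b::real_normed_vector"
  assumes "locally_lipschitz_at z f" "locally_lipschitz_at z g"
  shows "locally_lipschitz_at z (\<lambda>y. f y + g y)"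
proof -
  obtain e L M where e: "e > 0" and "L-lipschitz_on (cball z e) f" "M-lipschitz_on (cball z e) g"
    using locally_lipschitz_at_pair_common_radius[OF assms] .
  then show ?thesis
    using locally_lipschitz_atI[OF e lipschitz_on_add] by blast
qed

lemma locally_lipschitz_at_diff:
  fixes f g :: "'a::metric_space \<Rightarrow> 'b::real_normed_vector"
  assumes "locally_lipschitz_at z f" "locally_lipschitz_at z g"
  shows "locally_lipschitz_at z (\<lambda>y. f y - g y)"
proof -
  obtain e L M where e: "e > 0" and "L-lipschitz_on (cball z e) f" "M-lipschitz_on (cball z e) g"
    using locally_lipschitz_at_pair_common_radius[OF assms] .
  then show ?thesis
    using locally_lipschitz_atI[OF e lipschitz_on_diff] by blast
qed

lemma locally_lipschitz_at_Pair:
  assumes "locally_lipschitz_at z f" "locally_lipschitz_at z g"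
  shows "locally_lipschitz_at z (\<lambda>y. (f y, g y))"
proof -
  obtain e L M where e: "e > 0" and "L-lipschitz_on (cball z e) f" "M-lipschitz_on (cball z e) g"
    using locally_lipschitz_at_pair_common_radius[OF assms] .
  then show ?thesis
    using locally_lipschitz_atI[OF e lipschitz_on_Pair] by blast
qed

lemma locally_lipschitz_at_mult:
  fixes f g :: "'a::metric_space \<Rightarrow> real"
  assumes "locally_lipschitz_at z f" "locally_lipschitz_at z g"
  shows "locally_lipschitz_at z (\<lambda>y. f y * g y)"
proof -
  obtain e L M where e: "e > 0" and L: "L-lipschitz_on (cball z e) f"
    and M: "M-lipschitz_on (cball z e) g"
    using locally_lipschitz_at_pair_common_radius[OF assms] by blast
  define Bf where "Bf = norm (f z) + L * e"
  define Bg where "Bg = norm (g z) + M * e"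
  have "(Bf * M + Bg * L)-lipschitz_on (cball z e) (\<lambda>y. f y * g y)"
  proof (rule lipschitz_onI)
    fix a b assume ab: "a \<in> cball z e" "b \<in> cball z e"
    have "f a * g a - f b * g b = f a * (g a - g b) + g b * (f a - f b)"
      by (simp add: algebra_simps)
    then have "dist (f a * g a) (f b * g b) \<le> \<bar>f a\<bar> * dist (g a) (g b) + \<bar>g b\<bar> * dist (f a) (f b)"
      using abs_triangle_ineq[of "f a * (g a - g b)" "g b * (f a - f b)"]
      by (simp add: dist_real_def abs_mult)
    also have "\<dots> \<le> Bf * (M * dist a b) + Bg * (L * dist a b)"
      using lipschitz_on_cball_bounded[OF L ab(1)] lipschitz_on_cball_bounded[OF M ab(2)]
        lipschitz_onD[OF L ab] lipschitz_onD[OF M ab]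
      unfolding Bf_def Bg_def by (intro add_mono mult_mono) auto
    finally show "dist (f a * g a) (f b * g b) \<le> (Bf * M + Bg * L) * dist a b"
      by (simp add: algebra_simps)
  next
    show "0 \<le> Bf * M + Bg * L"
      unfolding Bf_def Bg_def using e lipschitz_on_nonneg[OF L] lipschitz_on_nonneg[OF M] by simp
  qed
  then show ?thesis
    using e by (rule locally_lipschitz_atI[rotated])
qed

lemma lipschitz_on_inverse:
  fixes f :: "'a::metric_space \<Rightarrow> real"
  assumes L: "L-lipschitz_on S f" and m: "m > 0" and away: "\<And>y. y \<in> S \<Longrightarrow> m \<le> \<bar>f y\<bar>"
  shows "(L / m\<^sup>2)-lipschitz_on S (\<lambda>y. inverse (f y))"
proof (rule lipschitz_onI)
  fix a b assume ab: "a \<in> S" "b \<in> S"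
  have "f a \<noteq> 0" "f b \<noteq> 0"
    using away[OF ab(1)] away[OF ab(2)] m by auto
  then have "inverse (f a) - inverse (f b) = (f b - f a) / (f a * f b)"
    by (simp add: field_simps)
  then have "dist (inverse (f a)) (inverse (f b)) = dist (f a) (f b) / (\<bar>f a\<bar> * \<bar>f b\<bar>)"
    by (simp add: dist_real_def abs_mult abs_minus_commute)
  also have "\<dots> \<le> (L * dist a b) / m\<^sup>2"
  proof (rule frac_le)
    show "0 \<le> L * dist a b"
      using lipschitz_on_nonneg[OF L] by simp
    show "dist (f a) (f b) \<le> L * dist a b"
      by (rule lipschitz_onD[OF L ab])
    show "0 < m\<^sup>2"
      using m by simp
    show "m\<^sup>2 \<le> \<bar>f a\<bar> * \<bar>f b\<bar>"
      unfolding power2_eq_square using away[OF ab(1)] away[OF ab(2)] m by (intro mult_mono) auto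
  qed
  finally show "dist (inverse (f a)) (inverse (f b)) \<le> L / m\<^sup>2 * dist a b"
    by simp
qed (use lipschitz_on_nonneg[OF L] in simp)

lemma locally_lipschitz_at_inverse:
  fixes f :: "'a::metric_space \<Rightarrow> real"
  assumes f: "locally_lipschitz_at z f" and nonzero: "f z \<noteq> 0"
  shows "locally_lipschitz_at z (\<lambda>y. inverse (f y))"
proof -
  obtain e0 L where e0: "e0 > 0" and L0: "L-lipschitz_on (cball z e0) f"
    using f unfolding locally_lipschitz_at_def by blast
  have L_nonneg: "L \<ge> 0"
    using lipschitz_on_nonneg[OF L0] .
  define m where "m = \<bar>f z\<bar> / 2"
  define e where "e = min e0 (m / (L + 1))"
  have m: "m > 0" and e: "e > 0"
    unfolding e_def m_def using nonzero e0 L_nonneg by auto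
  have L: "L-lipschitz_on (cball z e) f"
    using L0 by (rule lipschitz_on_cball_shrink) (simp add: e_def)
  have "m \<le> \<bar>f y\<bar>" if "y \<in> cball z e" for y
  proof -
    have "\<bar>f y\<bar> \<ge> \<bar>f z\<bar> - L * e"
      using lipschitz_on_cball_dist_centre[OF L that] abs_triangle_ineq2[of "f z" "f y"]
      by (simp add: dist_real_def abs_minus_commute)
    moreover have "L * e \<le> (L + 1) * (m / (L + 1))"
      unfolding e_def using L_nonneg e0 m by (intro mult_mono) auto
    moreover have "(L + 1) * (m / (L + 1)) = m"
      using L_nonneg by simp
    ultimately show ?thesis
      unfolding m_def by linarith
  qed
  with lipschitz_on_inverse[OF L m] show ?thesis
    using e by (blast intro: locally_lipschitz_atI)
qed

lemma locally_lipschitz_at_divide: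
  fixes f g :: "'a::metric_space \<Rightarrow> real"
  assumes "locally_lipschitz_at z f" "locally_lipschitz_at z g" "g z \<noteq> 0"
  shows "locally_lipschitz_at z (\<lambda>y. f y / g y)"
  using locally_lipschitz_at_mult[OF assms(1) locally_lipschitz_at_inverse[OF assms(2,3)]]
  by (simp add: divide_inverse)

lemma locally_lipschitz_at_sum:
  fixes f :: "'i \<Rightarrow> 'a::metric_space \<Rightarrow> 'b::real_normed_vector"
  assumes "\<And>i. i \<in> S \<Longrightarrow> locally_lipschitz_at z (f i)"
  shows "locally_lipschitz_at z (\<lambda>y. \<Sum>i\<in>S. f i y)"
proof (cases "finite S")
  case True
  then show ?thesis
    using assms
    by (induction S rule: finite_induct) (auto intro: locally_lipschitz_at_add locally_lipschitz_at_const)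
qed (simp add: locally_lipschitz_at_const)

lemma locally_lipschitz_at_prod:
  fixes f :: "'i \<Rightarrow> 'a::metric_space \<Rightarrow> real"
  assumes "\<And>i. i \<in> S \<Longrightarrow> locally_lipschitz_at z (f i)"
  shows "locally_lipschitz_at z (\<lambda>y. \<Prod>i\<in>S. f i y)"
proof (cases "finite S")
  case True
  then show ?thesis
    using assms
    by (induction S rule: finite_induct) (auto intro: locally_lipschitz_at_mult locally_lipschitz_at_const)
qed (simp add: locally_lipschitz_at_const)

lemma locally_lipschitz_at_vec:
  fixes f :: "'a::metric_space \<Rightarrow> real^'n"
  assumes "\<And>i. locally_lipschitz_at z (\<lambda>y. f y $ i)"
  shows "locally_lipschitz_at z f"
proof -
  obtain e L where e: "e > 0" and L: "\<And>i. (L i)-lipschitz_on (cball z e) (\<lambda>y. f y $ i)"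
    using locally_lipschitz_at_common_radius[of UNIV z "\<lambda>i y. f y $ i"] assms by auto
  have "(\<Sum>i\<in>UNIV. L i)-lipschitz_on (cball z e) f"
  proof (rule lipschitz_onI)
    fix a b assume ab: "a \<in> cball z e" "b \<in> cball z e"
    have "dist (f a) (f b) \<le> (\<Sum>i\<in>UNIV. \<bar>(f a - f b) $ i\<bar>)"
      unfolding dist_norm by (rule norm_le_l1_cart)
    also have "\<dots> \<le> (\<Sum>i\<in>UNIV. L i * dist a b)"
      using lipschitz_onD[OF L ab] by (intro sum_mono) (simp add: dist_real_def)
    finally show "dist (f a) (f b) \<le> (\<Sum>i\<in>UNIV. L i) * dist a b"
      by (simp add: sum_distrib_right)
  qed (use lipschitz_on_nonneg[OF L] in \<open>simp add: sum_nonneg\<close>)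
  then show ?thesis
    using e by (rule locally_lipschitz_atI[rotated])
qed

lemma locally_lipschitz_at_det:
  fixes M :: "'a::metric_space \<Rightarrow> real^'n^'n"
  assumes "\<And>i j. locally_lipschitz_at z (\<lambda>y. M y $ i $ j)"
  shows "locally_lipschitz_at z (\<lambda>y. det (M y))"
  unfolding det_def
  by (intro locally_lipschitz_at_sum locally_lipschitz_at_mult locally_lipschitz_at_prod
      locally_lipschitz_at_const assms)

lemma locally_lipschitz_at_snd_nth:
  fixes z :: "'a::real_normed_vector \<times> (real^'n)"
  shows "locally_lipschitz_at z (\<lambda>y. snd y $ k)"
  by (rule bounded_linear_imp_locally_lipschitz_at)
    (rule bounded_linear_compose[OF bounded_linear_vec_nth bounded_linear_snd])

section \<open>Local existence for autonomous ODEs\<close>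

text \<open>The Picard operator of \<open>z' = f z, z 0 = z0\<close> on bounded continuous functions on the whole
  line: time is clamped to the window \<open>[-h, h]\<close>, and the two integrals from \<open>-h\<close> express the
  signed integral from \<open>0\<close> to \<open>t\<close>.\<close>

definition picard_step :: "('a::banach \<Rightarrow> 'a) \<Rightarrow> real \<Rightarrow> 'a \<Rightarrow> (real \<Rightarrow>\<^sub>C 'a) \<Rightarrow> real \<Rightarrow> 'a" where
  "picard_step f h z0 u t = z0 + integral {-h..max (-h) (min h t)} (\<lambda>s. f (apply_bcontfun u s))
     - integral {-h..0} (\<lambda>s. f (apply_bcontfun u s))"

context
  fixes f :: "'a::banach \<Rightarrow> 'a" and L M h :: real
  assumes lip: "L-lipschitz_on UNIV f" and bound: "\<And>z. norm (f z) \<le> M" and h: "h > 0"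
begin

lemma continuous_on_comp_bcontfun: "continuous_on S (\<lambda>s. f (apply_bcontfun u s))"
  using lipschitz_on_continuous_on[OF lip] by (rule continuous_on_compose2) auto

lemma norm_integral_comp_bcontfun_le:
  assumes "c \<in> {-h..h}"
  shows "norm (integral {-h..c} (\<lambda>s. f (apply_bcontfun u s))) \<le> M * (c + h)"
  using integral_bound[of "-h" c "\<lambda>s. f (apply_bcontfun u s)" M] assms bound
    continuous_on_comp_bcontfun by auto

lemma norm_integral_comp_bcontfun_diff_le:
  assumes "c \<in> {-h..h}"
  shows "norm (integral {-h..c} (\<lambda>s. f (apply_bcontfun u s)) - integral {-h..c} (\<lambda>s. f (apply_bcontfun w s)))
    \<le> L * dist u w * (c + h)"
proof -
  have "integral {-h..c} (\<lambda>s. f (apply_bcontfun u s)) - integral {-h..c} (\<lambda>s. f (apply_bcontfun w s))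
      = integral {-h..c} (\<lambda>s. f (apply_bcontfun u s) - f (apply_bcontfun w s))"
    by (intro integral_diff[symmetric] integrable_continuous_real continuous_on_comp_bcontfun)
  also have "norm \<dots> \<le> L * dist u w * (c - - h)"
  proof (rule integral_bound)
    fix s
    have "norm (f (apply_bcontfun u s) - f (apply_bcontfun w s)) \<le> L * dist (u s) (w s)"
      using lipschitz_onD[OF lip] by (simp add: dist_norm)
    also have "\<dots> \<le> L * dist u w"
      using dist_bounded lipschitz_on_nonneg[OF lip] by (rule mult_left_mono)
    finally show "norm (f (apply_bcontfun u s) - f (apply_bcontfun w s)) \<le> L * dist u w" .
  qed (use assms in \<open>auto intro!: continuous_intros continuous_on_comp_bcontfun\<close>)
  finally show ?thesis
    by simp
qed

lemma picard_step_dist_le: "norm (picard_step f h z0 u t - z0) \<le> 3 * h * M"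
proof -
  define c where "c = max (-h) (min h t)"
  have c: "c \<in> {-h..h}"
    unfolding c_def using h by auto
  have M: "0 \<le> M"
    using bound[of z0] norm_ge_zero order_trans by blast
  have "norm (picard_step f h z0 u t - z0)
      \<le> norm (integral {-h..c} (\<lambda>s. f (apply_bcontfun u s))) + norm (integral {-h..0} (\<lambda>s. f (apply_bcontfun u s)))"
    unfolding picard_step_def c_def by (simp add: norm_triangle_ineq4)
  also have "\<dots> \<le> M * (c + h) + M * (0 + h)"
    using norm_integral_comp_bcontfun_le[OF c] norm_integral_comp_bcontfun_le[of 0] h
    by (intro add_mono) auto
  also have "\<dots> \<le> 3 * h * M"
    using c M mult_left_mono[of c h M] by (simp add: algebra_simps)
  finally show ?thesis .
qed

lemma picard_step_bcontfun: "picard_step f h z0 u \<in> bcontfun"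
proof (rule bcontfun_normI)
  have "continuous_on {-h..h} (\<lambda>c. integral {-h..c} (\<lambda>s. f (apply_bcontfun u s)))"
    by (intro indefinite_integral_continuous_1 integrable_continuous_real continuous_on_comp_bcontfun)
  then have "continuous_on UNIV (\<lambda>t. integral {-h..max (-h) (min h t)} (\<lambda>s. f (apply_bcontfun u s)))"
    by (rule continuous_on_compose2) (use h in \<open>auto intro!: continuous_intros\<close>)
  then show "continuous_on UNIV (picard_step f h z0 u)"
    unfolding picard_step_def[abs_def] by (intro continuous_intros)
  show "norm (picard_step f h z0 u t) \<le> norm z0 + 3 * h * M" for t
    using picard_step_dist_le[of z0 u t] norm_triangle_sub[of "picard_step f h z0 u t" z0] by linarith
qed

lemma picard_step_contraction:
  "dist (Bcontfun (picard_step f h z0 u)) (Bcontfun (picard_step f h z0 w)) \<le> 3 * h * L * dist u w"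
proof (rule dist_bound)
  fix t
  define c where "c = max (-h) (min h t)"
  have c: "c \<in> {-h..h}"
    unfolding c_def using h by auto
  have L: "0 \<le> L * dist u w"
    using lipschitz_on_nonneg[OF lip] by simp
  have "dist (picard_step f h z0 u t) (picard_step f h z0 w t)
      \<le> norm (integral {-h..c} (\<lambda>s. f (apply_bcontfun u s)) - integral {-h..c} (\<lambda>s. f (apply_bcontfun w s)))
        + norm (integral {-h..0} (\<lambda>s. f (apply_bcontfun u s)) - integral {-h..0} (\<lambda>s. f (apply_bcontfun w s)))"
    unfolding picard_step_def c_def dist_norm
    by (rule order_trans[OF _ norm_triangle_ineq4]) (simp add: algebra_simps)
  also have "\<dots> \<le> L * dist u w * (c + h) + L * dist u w * (0 + h)"
    using norm_integral_comp_bcontfun_diff_le[OF c] norm_integral_comp_bcontfun_diff_le[of 0] h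
    by (intro add_mono) auto
  also have "\<dots> \<le> 3 * h * L * dist u w"
    using mult_left_mono[OF _ L, of "c + h" "2 * h"] c by (simp add: algebra_simps)
  finally show "dist (Bcontfun (picard_step f h z0 u) t) (Bcontfun (picard_step f h z0 w) t)
      \<le> 3 * h * L * dist u w"
    using picard_step_bcontfun by (simp add: Bcontfun_inverse)
qed

lemma picard_step_fixpoint:
  assumes u: "picard_step f h z0 u = apply_bcontfun u" and t: "t \<in> {-h<..<h}"
  shows "(apply_bcontfun u has_vector_derivative f (u t)) (at t)"
proof (rule has_vector_derivative_integral_equation)
  show "apply_bcontfun u s = (z0 - integral {-h..0} (\<lambda>s. f (apply_bcontfun u s)))
      + integral {-h..s} (\<lambda>s. f (apply_bcontfun u s))" if "s \<in> {-h<..<h}" for s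
    using that fun_cong[OF u, of s] unfolding picard_step_def by (simp add: algebra_simps)
qed (use t continuous_on_comp_bcontfun in auto)

end

lemma picard_lindeloef_global:
  fixes f :: "'a::banach \<Rightarrow> 'a"
  assumes lip: "L-lipschitz_on UNIV f" and bound: "\<And>z. norm (f z) \<le> M"
    and h: "h > 0" and contraction: "3 * h * L < 1"
  shows "\<exists>z. z 0 = z0 \<and> (\<forall>t\<in>{-h<..<h}.
           (z has_vector_derivative f (z t)) (at t) \<and> norm (z t - z0) \<le> 3 * h * M)"
proof -
  obtain u where "Bcontfun (picard_step f h z0 u) = u"
    using banach_fix_type[of "3 * h * L" "\<lambda>u. Bcontfun (picard_step f h z0 u)"]
      picard_step_contraction[OF lip bound h] contraction h
      lipschitz_on_nonneg[OF lip] by auto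
  then have u: "picard_step f h z0 u = apply_bcontfun u"
    using picard_step_bcontfun[OF lip bound h] by (metis Bcontfun_inverse)
  have "u 0 = z0"
    using fun_cong[OF u, of 0] h unfolding picard_step_def by simp
  then show ?thesis
    using picard_step_fixpoint[OF lip bound h u] picard_step_dist_le[OF lip bound h, of z0 u] u
    by metis
qed

lemma lipschitz_on_closest_point_cball:
  fixes f :: "'a::euclidean_space \<Rightarrow> 'b::real_normed_vector"
  assumes r: "r > 0" and lip: "L-lipschitz_on (cball z0 r) f"
  shows "L-lipschitz_on UNIV (\<lambda>y. f (closest_point (cball z0 r) y))"
    and "norm (f (closest_point (cball z0 r) y)) \<le> norm (f z0) + L * r"
proof -
  have in_ball: "closest_point (cball z0 r) y \<in> cball z0 r" for y
    using r by (intro closest_point_in_set) auto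
  have "dist (closest_point (cball z0 r) x) (closest_point (cball z0 r) y) \<le> 1 * dist x y" for x y
    using r by (simp add: closest_point_lipschitz)
  then have "1-lipschitz_on UNIV (closest_point (cball z0 r))"
    by (intro lipschitz_onI) auto
  moreover have "L-lipschitz_on (range (closest_point (cball z0 r))) f"
    using lip in_ball by (auto intro: lipschitz_on_subset)
  ultimately show "L-lipschitz_on UNIV (\<lambda>y. f (closest_point (cball z0 r) y))"
    using lipschitz_on_compose2[of 1 UNIV "closest_point (cball z0 r)" L f] by simp
  show "norm (f (closest_point (cball z0 r) y)) \<le> norm (f z0) + L * r"
    by (rule lipschitz_on_cball_bounded[OF lip in_ball])
qed

lemma picard_lindeloef_local:
  fixes f :: "'a::euclidean_space \<Rightarrow> 'a"
  assumes r: "r > 0" and lip: "L-lipschitz_on (cball z0 r) f"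
  shows "\<exists>h>0. \<exists>z. z 0 = z0 \<and>
           (\<forall>t\<in>{-h<..<h}. z t \<in> cball z0 r \<and> (z has_vector_derivative f (z t)) (at t))"
proof -
  define p where "p = closest_point (cball z0 r)"
  define M where "M = norm (f z0) + L * r"
  have L: "L \<ge> 0"
    using lipschitz_on_nonneg[OF lip] .
  have M: "M \<ge> 0"
    unfolding M_def using L r by auto
  define h where "h = min (1 / (6 * (L + 1))) (r / (3 * (M + 1)))"
  have h: "h > 0"
    unfolding h_def using L M r by auto
  have "3 * h * L \<le> 3 * (1 / (6 * (L + 1))) * L"
    unfolding h_def using L by (intro mult_right_mono) auto
  also have "\<dots> < 1"
    using L by (simp add: field_simps)
  finally have contraction: "3 * h * L < 1" .
  have "3 * h * M \<le> 3 * (r / (3 * (M + 1))) * M"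
    unfolding h_def using M by (intro mult_right_mono) auto
  also have "\<dots> \<le> r"
    using M r by (simp add: field_simps)
  finally have hM: "3 * h * M \<le> r" .
  obtain z where z0: "z 0 = z0" and z: "\<And>t. t \<in> {-h<..<h} \<Longrightarrow>
      (z has_vector_derivative f (p (z t))) (at t) \<and> norm (z t - z0) \<le> 3 * h * M"
    using picard_lindeloef_global[OF lipschitz_on_closest_point_cball[OF r lip] h contraction]
    unfolding p_def M_def by metis
  have z_in: "z t \<in> cball z0 r" if "t \<in> {-h<..<h}" for t
    using z[OF that] hM by (auto simp: dist_norm norm_minus_commute)
  then have "p (z t) = z t" if "t \<in> {-h<..<h}" for t
    unfolding p_def using that by (intro closest_point_self) auto
  then show ?thesis
    using h z0 z z_in by metis
qed

section \<open>Time reparametrization\<close>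

locale time_reparametrization =
  fixes I :: "real set" and \<sigma> n :: "real \<Rightarrow> real"
  assumes open_I: "open I" and interval_I: "is_interval I"
    and has_derivative: "\<And>t. t \<in> I \<Longrightarrow> (\<sigma> has_real_derivative n t) (at t)"
    and derivative_nonzero: "\<And>t. t \<in> I \<Longrightarrow> n t \<noteq> 0"
begin

lemma continuous_on: "continuous_on I \<sigma>"
  using has_derivative by (auto intro!: continuous_at_imp_continuous_on DERIV_isCont)

lemma inj_on: "inj_on \<sigma> I"
proof -
  have "\<sigma> s \<noteq> \<sigma> t" if st: "s \<in> I" "t \<in> I" "s < t" for s t
  proof
    assume eq: "\<sigma> s = \<sigma> t"
    have sub: "{s..t} \<subseteq> I"
      using interval_I st unfolding is_interval_1 by (meson atLeastAtMost_iff subsetI)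
    have "(\<sigma> has_derivative (\<lambda>h. n r * h)) (at r)" if "s < r" "r < t" for r
      using has_derivative[of r] subsetD[OF sub, of r] that by (simp add: has_field_derivative_def)
    from Rolle_deriv[OF \<open>s < t\<close> eq continuous_on_subset[OF continuous_on sub] this]
    obtain r where r: "s < r" "r < t" "(\<lambda>h. n r * h) = (\<lambda>h. 0)"
      by blast
    then show False
      using derivative_nonzero[of r] subsetD[OF sub, of r] fun_cong[OF r(3), of 1] by simp
  qed
  then show ?thesis
    unfolding inj_on_def by (metis linorder_neq_iff)
qed

lemma open_image: "open (\<sigma> ` I)"
  using injective_into_1d_imp_open_map_UNIV[OF open_I continuous_on inj_on] by simp

lemma inverse_has_derivative:
  assumes t: "t \<in> I"
  shows "(inv_into I \<sigma> has_real_derivative 1 / n t) (at (\<sigma> t))"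
  unfolding has_field_derivative_def
proof (rule has_derivative_inverse_strong[OF open_I t continuous_on])
  show "inv_into I \<sigma> (\<sigma> s) = s" if "s \<in> I" for s
    using inj_on that by simp
  show "(\<sigma> has_derivative (\<lambda>h. n t * h)) (at t)"
    using has_derivative[OF t] by (simp add: has_field_derivative_def)
  show "(\<lambda>h. n t * h) \<circ> (*) (1 / n t) = id"
    using derivative_nonzero[OF t] by (auto simp: fun_eq_iff)
qed

lemma has_vector_derivative_iff:
  fixes x y :: "real \<Rightarrow> 'a::real_normed_vector"
  assumes xy: "\<And>s. s \<in> I \<Longrightarrow> y (\<sigma> s) = x s" and t: "t \<in> I"
  shows "(y has_vector_derivative y') (at (\<sigma> t)) \<longleftrightarrow> (x has_vector_derivative n t *\<^sub>R y') (at t)"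
proof
  assume "(y has_vector_derivative y') (at (\<sigma> t))"
  moreover have "(\<sigma> has_vector_derivative n t) (at t)"
    using has_derivative[OF t] by (simp add: has_real_derivative_iff_has_vector_derivative)
  ultimately have "((y \<circ> \<sigma>) has_vector_derivative n t *\<^sub>R y') (at t)"
    by (rule vector_diff_chain_at[rotated])
  then show "(x has_vector_derivative n t *\<^sub>R y') (at t)"
    by (rule has_vector_derivative_transform_within_open[OF _ open_I t]) (simp add: xy)
next
  assume x: "(x has_vector_derivative n t *\<^sub>R y') (at t)"
  have "(inv_into I \<sigma> has_vector_derivative 1 / n t) (at (\<sigma> t))"
    using inverse_has_derivative[OF t] by (simp add: has_real_derivative_iff_has_vector_derivative)
  then have "((x \<circ> inv_into I \<sigma>) has_vector_derivative (1 / n t) *\<^sub>R n t *\<^sub>R y') (at (\<sigma> t))"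
    using x inv_into_f_f[OF inj_on t] by (intro vector_diff_chain_at) auto
  then have "((x \<circ> inv_into I \<sigma>) has_vector_derivative y') (at (\<sigma> t))"
    using derivative_nonzero[OF t] by simp
  then show "(y has_vector_derivative y') (at (\<sigma> t))"
    by (rule has_vector_derivative_transform_within_open[OF _ open_image])
      (use t xy inj_on in \<open>auto simp: inv_into_into\<close>)
qed

lemma has_real_derivative_iff:
  assumes "\<And>s. s \<in> I \<Longrightarrow> k (\<sigma> s) = h s" and "t \<in> I"
  shows "(k has_real_derivative Y) (at (\<sigma> t)) \<longleftrightarrow> (h has_real_derivative Y * n t) (at t)"
  using has_vector_derivative_iff[where x=h and y=k, OF assms, of Y]
  by (simp add: has_real_derivative_iff_has_vector_derivative mult.commute)

lemma differentiable_iff: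
  fixes x y :: "real \<Rightarrow> 'a::real_normed_vector"
  assumes xy: "\<And>s. s \<in> I \<Longrightarrow> y (\<sigma> s) = x s" and t: "t \<in> I"
  shows "y differentiable at (\<sigma> t) \<longleftrightarrow> x differentiable at t"
proof
  assume "y differentiable at (\<sigma> t)"
  then have "(y has_vector_derivative vector_derivative y (at (\<sigma> t))) (at (\<sigma> t))"
    by (rule vector_derivative_works[THEN iffD1])
  then have "(x has_vector_derivative n t *\<^sub>R vector_derivative y (at (\<sigma> t))) (at t)"
    using has_vector_derivative_iff[where x=x and y=y, OF xy t] by simp
  then show "x differentiable at t"
    by (rule differentiableI_vector)
next
  assume "x differentiable at t"
  then have "(x has_vector_derivative n t *\<^sub>R ((1 / n t) *\<^sub>R vector_derivative x (at t))) (at t)"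
    using derivative_nonzero[OF t] vector_derivative_works[THEN iffD1] by simp
  then have "(y has_vector_derivative (1 / n t) *\<^sub>R vector_derivative x (at t)) (at (\<sigma> t))"
    using has_vector_derivative_iff[where x=x and y=y, OF xy t] by simp
  then show "y differentiable at (\<sigma> t)"
    by (rule differentiableI_vector)
qed

end

lemma sum_axis_mult: "(\<Sum>j\<in>UNIV. axis i (1::real) $ j * c j) = c i"
proof -
  have "axis i (1::real) $ j * c j = (if j = i then c j else 0)" for j
    by (simp add: axis_def)
  then show ?thesis
    by simp
qed

lemma pd_eq_derivative_axis:
  fixes f :: "real^'n \<Rightarrow> real"
  assumes "(f has_derivative f') (at x)"
  shows "pd f x i = f' (axis i 1)"
proof -
  have "((\<lambda>s. x + s *\<^sub>R axis i 1) has_derivative (\<lambda>s. s *\<^sub>R axis i 1)) (at 0)"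
    by (auto intro!: derivative_eq_intros)
  from has_derivative_compose[OF this, of f f'] assms
  have "((\<lambda>s. f (x + s *\<^sub>R axis i 1)) has_derivative (\<lambda>s. f' (s *\<^sub>R axis i 1))) (at 0)"
    by simp
  moreover have "(\<lambda>s. f' (s *\<^sub>R axis i 1)) = (*) (f' (axis i 1))"
    using linear_scale[OF has_derivative_linear[OF assms]] by (auto simp: fun_eq_iff)
  ultimately have "((\<lambda>s. f (x + s *\<^sub>R axis i 1)) has_real_derivative f' (axis i 1)) (at 0)"
    by (simp add: has_field_derivative_def)
  then show ?thesis
    unfolding pd_def by (rule DERIV_imp_deriv)
qed

lemma smooth_onE:
  assumes "smooth_on U f"
  obtains D where "\<And>x. x \<in> U \<Longrightarrow> D [] x = f x"
    "\<And>ds x. x \<in> U \<Longrightarrow> (D ds has_derivative (\<lambda>h. \<Sum>i\<in>UNIV. h $ i * D (i # ds) x)) (at x)"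
  using assms unfolding smooth_on_def by blast

lemma smooth_on_witness_pd:
  assumes U: "open U" and x: "x \<in> U"
    and D: "\<And>x. x \<in> U \<Longrightarrow> D [] x = f x"
      "\<And>ds x. x \<in> U \<Longrightarrow> (D ds has_derivative (\<lambda>h. \<Sum>i\<in>UNIV. h $ i * D (i # ds) x)) (at x)"
  shows "(f has_derivative (\<lambda>h. \<Sum>i\<in>UNIV. h $ i * D [i] x)) (at x)" and "pd f x i = D [i] x"
proof -
  show *: "(f has_derivative (\<lambda>h. \<Sum>i\<in>UNIV. h $ i * D [i] x)) (at x)"
    by (rule has_derivative_transform_within_open[OF D(2)[of x "[]"] U x]) (use D(1) x in auto)
  show "pd f x i = D [i] x"
    using pd_eq_derivative_axis[OF *, of i] by (simp add: sum_axis_mult)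
qed

lemma smooth_on_has_derivative:
  fixes f :: "real^'n \<Rightarrow> real"
  assumes "smooth_on U f" "open U" "x \<in> U"
  shows "(f has_derivative (\<lambda>h. \<Sum>i\<in>UNIV. h $ i * pd f x i)) (at x)"
proof -
  obtain D where "\<And>x. x \<in> U \<Longrightarrow> D [] x = f x"
    "\<And>ds x. x \<in> U \<Longrightarrow> (D ds has_derivative (\<lambda>h. \<Sum>i\<in>UNIV. h $ i * D (i # ds) x)) (at x)"
    using smooth_onE[OF assms(1)] by blast
  from smooth_on_witness_pd[OF assms(2,3) this] show ?thesis
    by simp
qed

lemma smooth_on_pd:
  fixes f :: "real^'n \<Rightarrow> real"
  assumes "smooth_on U f" "open U"
  shows "smooth_on U (\<lambda>x. pd f x i)"
proof -
  obtain D where D: "\<And>x. x \<in> U \<Longrightarrow> D [] x = f x"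
    "\<And>ds x. x \<in> U \<Longrightarrow> (D ds has_derivative (\<lambda>h. \<Sum>i\<in>UNIV. h $ i * D (i # ds) x)) (at x)"
    using smooth_onE[OF assms(1)] by blast
  show ?thesis
    unfolding smooth_on_def
  proof (intro exI[of _ "\<lambda>ds. D (ds @ [i])"] conjI ballI allI)
    show "D ([] @ [i]) x = pd f x i" if "x \<in> U" for x
      using smooth_on_witness_pd[OF assms(2) that D] by simp
    show "(D (ds @ [i]) has_derivative (\<lambda>h. \<Sum>j\<in>UNIV. h $ j * D ((j # ds) @ [i]) x)) (at x)"
      if "x \<in> U" for ds x
      using D(2)[OF that, of "ds @ [i]"] by simp
  qed
qed

lemma smooth_on_const: "smooth_on U (\<lambda>_. c)"
  unfolding smooth_on_def
  by (intro exI[of _ "\<lambda>ds _. if ds = [] then c else 0"]) (auto intro!: derivative_eq_intros)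

lemma smooth_on_continuous_on:
  fixes f :: "real^'n \<Rightarrow> real"
  assumes "smooth_on U f" "open U"
  shows "continuous_on U f"
  using smooth_on_has_derivative[OF assms]
  by (meson continuous_at_imp_continuous_on has_derivative_continuous)

lemma has_real_derivative_smooth_on_comp:
  fixes f :: "real^'n \<Rightarrow> real"
  assumes "smooth_on U f" "open U" "x t \<in> U" and x: "(x has_vector_derivative x') (at t)"
  shows "((\<lambda>s. f (x s)) has_real_derivative (\<Sum>j\<in>UNIV. pd f (x t) j * x' $ j)) (at t)"
proof -
  have "(x has_derivative (\<lambda>h. h *\<^sub>R x')) (at t)"
    using x by (simp add: has_vector_derivative_def)
  from has_derivative_compose[OF this smooth_on_has_derivative[OF assms(1-3)]]
  have "((\<lambda>s. f (x s)) has_derivative (\<lambda>h. \<Sum>i\<in>UNIV. (h *\<^sub>R x') $ i * pd f (x t) i)) (at t)" .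
  moreover have "(\<lambda>h. \<Sum>i\<in>UNIV. (h *\<^sub>R x') $ i * pd f (x t) i) = (*) (\<Sum>j\<in>UNIV. pd f (x t) j * x' $ j)"
    by (auto simp: fun_eq_iff sum_distrib_left mult_ac)
  ultimately show ?thesis
    by (simp add: has_field_derivative_def)
qed

lemma onorm_sum_components_le: "onorm (\<lambda>h::real^'n. \<Sum>i\<in>UNIV. h $ i * c i) \<le> (\<Sum>i\<in>UNIV. \<bar>c i\<bar>)"
proof (rule onorm_le)
  fix h :: "real^'n"
  have "norm (\<Sum>i\<in>UNIV. h $ i * c i) \<le> (\<Sum>i\<in>UNIV. \<bar>h $ i\<bar> * \<bar>c i\<bar>)"
    by (metis (no_types, lifting) abs_mult real_norm_def sum.cong sum_abs)
  also have "\<dots> \<le> (\<Sum>i\<in>UNIV. norm h * \<bar>c i\<bar>)"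
    by (intro sum_mono mult_right_mono) (auto simp: component_le_norm_cart)
  finally show "norm (\<Sum>i\<in>UNIV. h $ i * c i) \<le> (\<Sum>i\<in>UNIV. \<bar>c i\<bar>) * norm h"
    by (simp add: sum_distrib_left mult.commute)
qed

lemma smooth_on_locally_lipschitz_at:
  fixes f :: "real^'n \<Rightarrow> real"
  assumes f: "smooth_on U f" and U: "open U" and x0: "x0 \<in> U"
  shows "locally_lipschitz_at x0 f"
proof -
  obtain e where e: "e > 0" "cball x0 e \<subseteq> U"
    using U x0 open_contains_cball by blast
  have "bounded ((\<lambda>x. pd f x i) ` cball x0 e)" for i
    using smooth_on_continuous_on[OF smooth_on_pd[OF f U] U] e(2)
    by (intro compact_imp_bounded compact_continuous_image) (auto intro: continuous_on_subset)
  then have "\<exists>B. \<forall>x\<in>cball x0 e. \<bar>pd f x i\<bar> \<le> B" for i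
    unfolding bounded_iff by auto
  then obtain B where B: "\<And>i x. x \<in> cball x0 e \<Longrightarrow> \<bar>pd f x i\<bar> \<le> B i"
    by metis
  have "(\<Sum>i\<in>UNIV. B i)-lipschitz_on (cball x0 e) f"
  proof (rule bounded_derivative_imp_lipschitz)
    fix x assume x: "x \<in> cball x0 e"
    show "(f has_derivative (\<lambda>h. \<Sum>i\<in>UNIV. h $ i * pd f x i)) (at x within cball x0 e)"
      using smooth_on_has_derivative[OF f U] x e(2) has_derivative_at_withinI by blast
    have "(\<Sum>i\<in>UNIV. \<bar>pd f x i\<bar>) \<le> (\<Sum>i\<in>UNIV. B i)"
      using B[OF x] by (intro sum_mono) auto
    then show "onorm (\<lambda>h. \<Sum>i\<in>UNIV. h $ i * pd f x i) \<le> (\<Sum>i\<in>UNIV. B i)"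
      using onorm_sum_components_le[of "\<lambda>i. pd f x i"] by linarith
  next
    have "x0 \<in> cball x0 e"
      using e(1) by simp
    then have "0 \<le> B i" for i
      using B[of x0 i] abs_ge_zero[of "pd f x0 i"] by linarith
    then show "0 \<le> (\<Sum>i\<in>UNIV. B i)"
      by (simp add: sum_nonneg)
  qed simp
  then show ?thesis
    using e(1) by (rule locally_lipschitz_atI[rotated])
qed

definition momentum ::
  "(real^'n \<Rightarrow> 'n \<Rightarrow> 'n \<Rightarrow> real) \<Rightarrow> (real^'n \<Rightarrow> 'n \<Rightarrow> real) \<Rightarrow> real^'n \<Rightarrow> real^'n \<Rightarrow> 'n \<Rightarrow> real"
  where "momentum g a q w i = (\<Sum>j\<in>UNIV. g q i j * w $ j) + a q i"

definition lag1_gradient ::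
  "(real^'n \<Rightarrow> 'n \<Rightarrow> 'n \<Rightarrow> real) \<Rightarrow> (real^'n \<Rightarrow> 'n \<Rightarrow> real) \<Rightarrow> (real^'n \<Rightarrow> real)
     \<Rightarrow> real^'n \<Rightarrow> real^'n \<Rightarrow> 'n \<Rightarrow> real"
  where "lag1_gradient g a v q w i =
    1/2 * (\<Sum>j\<in>UNIV. \<Sum>k\<in>UNIV. pd (\<lambda>x. g x j k) q i * w $ j * w $ k)
      + (\<Sum>j\<in>UNIV. pd (\<lambda>x. a x j) q i * w $ j) - pd v q i"

definition momentum_pairing ::
  "(real^'n \<Rightarrow> 'n \<Rightarrow> 'n \<Rightarrow> real) \<Rightarrow> (real^'n \<Rightarrow> 'n \<Rightarrow> real) \<Rightarrow> real^'n \<Rightarrow> real^'n \<Rightarrow> real"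
  where "momentum_pairing g a q w =
    (\<Sum>j\<in>UNIV. \<Sum>k\<in>UNIV. g q j k * w $ j * w $ k) + (\<Sum>j\<in>UNIV. a q j * w $ j)"

lemma symmetric_bilinear_sum:
  fixes G :: "'n::finite \<Rightarrow> 'n \<Rightarrow> real"
  assumes sym: "\<And>i j. G i j = G j i"
  shows "(\<Sum>i\<in>UNIV. \<Sum>j\<in>UNIV. G i j * (h $ i * w $ j + w $ i * h $ j))
    = 2 * (\<Sum>i\<in>UNIV. h $ i * (\<Sum>j\<in>UNIV. G i j * w $ j))"
proof -
  have "(\<Sum>i\<in>UNIV. \<Sum>j\<in>UNIV. G i j * (w $ i * h $ j))
      = (\<Sum>j\<in>UNIV. \<Sum>i\<in>UNIV. G i j * (w $ i * h $ j))"
    by (rule sum.swap)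
  also have "\<dots> = (\<Sum>j\<in>UNIV. h $ j * (\<Sum>i\<in>UNIV. G j i * w $ i))"
  proof (rule sum.cong)
    show "(\<Sum>i\<in>UNIV. G i j * (w $ i * h $ j)) = h $ j * (\<Sum>i\<in>UNIV. G j i * w $ i)" for j
      by (simp add: sum_distrib_left sym[of _ j] mult_ac)
  qed simp
  finally show ?thesis
    by (simp add: distrib_left sum.distrib sum_distrib_left mult_ac)
qed

lemma pdp_lag1:
  fixes g :: "real^'n \<Rightarrow> 'n \<Rightarrow> 'n \<Rightarrow> real"
  assumes sym: "\<And>i j. g q i j = g q j i"
  shows "pdp (lag1 g a v) q w i = momentum g a q w i"
proof -
  have "((\<lambda>w'. lag1 g a v q w') has_derivative
     (\<lambda>h. 1/2 * (\<Sum>i\<in>UNIV. \<Sum>j\<in>UNIV. g q i j * (h $ i * w $ j + w $ i * h $ j))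
        + (\<Sum>i\<in>UNIV. a q i * h $ i))) (at w)"
    unfolding lag1_def by (auto intro!: derivative_eq_intros simp: algebra_simps)
  then have "((\<lambda>w'. lag1 g a v q w') has_derivative (\<lambda>h. \<Sum>i\<in>UNIV. h $ i * momentum g a q w i)) (at w)"
    unfolding symmetric_bilinear_sum[of "g q", OF sym]
    by (simp add: momentum_def distrib_left sum.distrib mult.commute)
  from pd_eq_derivative_axis[OF this, of i] show ?thesis
    unfolding pdp_def by (simp add: sum_axis_mult)
qed

lemma pdp_lag1_star:
  fixes g :: "real^'n \<Rightarrow> 'n \<Rightarrow> 'n \<Rightarrow> real"
  assumes sym: "\<And>i j. g q i j = g q j i"
  shows "pdp (lag1_star N g a v) q w i = N q * momentum g a q (N q *\<^sub>R w) i"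
proof -
  have "((\<lambda>w'. lag1_star N g a v q w') has_derivative
     (\<lambda>h. 1/2 * (\<Sum>i\<in>UNIV. \<Sum>j\<in>UNIV. (N q)\<^sup>2 * g q i j * (h $ i * w $ j + w $ i * h $ j))
        + (\<Sum>i\<in>UNIV. N q * a q i * h $ i))) (at w)"
    unfolding lag1_star_def by (auto intro!: derivative_eq_intros simp: algebra_simps)
  then have "((\<lambda>w'. lag1_star N g a v q w') has_derivative
      (\<lambda>h. \<Sum>i\<in>UNIV. h $ i * (N q * momentum g a q (N q *\<^sub>R w) i))) (at w)"
    unfolding symmetric_bilinear_sum[of "\<lambda>i j. (N q)\<^sup>2 * g q i j", OF sym[THEN arg_cong]]
    by (simp add: momentum_def distrib_left sum.distrib sum_distrib_left power2_eq_square mult_ac)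
  from pd_eq_derivative_axis[OF this, of i] show ?thesis
    unfolding pdp_def by (simp add: sum_axis_mult)
qed

lemma pdq_lag1:
  fixes g :: "real^'n \<Rightarrow> 'n \<Rightarrow> 'n \<Rightarrow> real"
  assumes U: "open U" and q: "q \<in> U"
    and g: "\<And>i j. smooth_on U (\<lambda>x. g x i j)" and a: "\<And>i. smooth_on U (\<lambda>x. a x i)"
    and v: "smooth_on U v"
  shows "pdq (lag1 g a v) q w i = lag1_gradient g a v q w i"
proof -
  note derivs = smooth_on_has_derivative[OF g U q] smooth_on_has_derivative[OF a U q]
    smooth_on_has_derivative[OF v U q]
  have "((\<lambda>q'. lag1 g a v q' w) has_derivative
     (\<lambda>h. 1/2 * (\<Sum>j\<in>UNIV. \<Sum>k\<in>UNIV. (\<Sum>m\<in>UNIV. h $ m * pd (\<lambda>x. g x j k) q m) * w $ j * w $ k)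
       + (\<Sum>j\<in>UNIV. (\<Sum>m\<in>UNIV. h $ m * pd (\<lambda>x. a x j) q m) * w $ j)
       - (\<Sum>m\<in>UNIV. h $ m * pd v q m))) (at q)"
    unfolding lag1_def by (auto intro!: derivative_eq_intros derivs)
  from pd_eq_derivative_axis[OF this, of i] show ?thesis
    unfolding pdq_def lag1_gradient_def by (simp add: sum_axis_mult)
qed

lemma pdq_lag1_star:
  fixes g :: "real^'n \<Rightarrow> 'n \<Rightarrow> 'n \<Rightarrow> real"
  assumes U: "open U" and q: "q \<in> U"
    and g: "\<And>i j. smooth_on U (\<lambda>x. g x i j)" and a: "\<And>i. smooth_on U (\<lambda>x. a x i)"
    and v: "smooth_on U v" and N: "smooth_on U N" and nonzero: "N q \<noteq> 0"
  shows "pdq (lag1_star N g a v) q p i =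
    lag1_gradient g a v q (N q *\<^sub>R p) i + pd N q i / N q * momentum_pairing g a q (N q *\<^sub>R p)"
proof -
  note derivs = smooth_on_has_derivative[OF g U q] smooth_on_has_derivative[OF a U q]
    smooth_on_has_derivative[OF v U q] smooth_on_has_derivative[OF N U q]
  have "((\<lambda>q'. lag1_star N g a v q' p) has_derivative
     (\<lambda>h. 1/2 * (\<Sum>j\<in>UNIV. \<Sum>k\<in>UNIV. (2 * N q * (\<Sum>m\<in>UNIV. h $ m * pd N q m) * g q j k
            + (N q)\<^sup>2 * (\<Sum>m\<in>UNIV. h $ m * pd (\<lambda>x. g x j k) q m)) * p $ j * p $ k)
       + (\<Sum>j\<in>UNIV. ((\<Sum>m\<in>UNIV. h $ m * pd N q m) * a q j
            + N q * (\<Sum>m\<in>UNIV. h $ m * pd (\<lambda>x. a x j) q m)) * p $ j)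
       - (\<Sum>m\<in>UNIV. h $ m * pd v q m))) (at q)"
    unfolding lag1_star_def
    by (auto intro!: derivative_eq_intros derivs simp: power2_eq_square algebra_simps)
  from pd_eq_derivative_axis[OF this, of i]
  have expand: "pdq (lag1_star N g a v) q p i =
      1/2 * (\<Sum>j\<in>UNIV. \<Sum>k\<in>UNIV. (2 * N q * pd N q i * g q j k
            + (N q)\<^sup>2 * pd (\<lambda>x. g x j k) q i) * p $ j * p $ k)
       + (\<Sum>j\<in>UNIV. (pd N q i * a q j + N q * pd (\<lambda>x. a x j) q i) * p $ j) - pd v q i"
    unfolding pdq_def by (simp only: sum_axis_mult)
  show ?thesis
    unfolding expand lag1_gradient_def momentum_pairing_def using nonzero
    by (simp add: field_simps sum_distrib_left sum_divide_distrib power2_eq_square sum.distrib)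
qed

text \<open>The extra force that a time change \<open>d\<tau> = N dt\<close> produces in the Euler--Lagrange
  equations of \<open>l\<^sub>1\<close>, written in the original time \<open>t\<close>.\<close>

definition reparametrization_force ::
  "(real^'n \<Rightarrow> real) \<Rightarrow> (real^'n \<Rightarrow> 'n \<Rightarrow> 'n \<Rightarrow> real) \<Rightarrow> (real^'n \<Rightarrow> 'n \<Rightarrow> real)
     \<Rightarrow> real^'n \<Rightarrow> real^'n \<Rightarrow> 'n \<Rightarrow> real"
  where "reparametrization_force N g a q w i =
    pd N q i / N q * momentum_pairing g a q w
      - (\<Sum>j\<in>UNIV. pd N q j * w $ j) * momentum g a q w i / N q"

lemma EL_solution_subset: "EL_solution L F I x \<Longrightarrow> J \<subseteq> I \<Longrightarrow> EL_solution L F J x"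
  unfolding EL_solution_def by blast

lemma EL_solution_force_cong:
  assumes "x ` I \<subseteq> U" "\<And>q w i. q \<in> U \<Longrightarrow> F q w i = F' q w i"
  shows "EL_solution L F I x \<longleftrightarrow> EL_solution L F' I x"
  using assms unfolding EL_solution_def by (simp add: image_subset_iff)

locale gyroscopic_system =
  fixes U :: "(real^'n) set"
    and g :: "real^'n \<Rightarrow> 'n \<Rightarrow> 'n \<Rightarrow> real"
    and a :: "real^'n \<Rightarrow> 'n \<Rightarrow> real"
    and v :: "real^'n \<Rightarrow> real"
    and C :: "real^'n \<Rightarrow> 'n \<Rightarrow> 'n \<Rightarrow> 'n \<Rightarrow> real"
    and N :: "real^'n \<Rightarrow> real"
  assumes U_open: "open U"
    and g_smooth: "\<And>i j. smooth_on U (\<lambda>x. g x i j)"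
    and g_sym: "\<And>x i j. x \<in> U \<Longrightarrow> g x i j = g x j i"
    and g_pos: "\<And>x \<xi>. x \<in> U \<Longrightarrow> \<xi> \<noteq> 0 \<Longrightarrow> (\<Sum>i\<in>UNIV. \<Sum>j\<in>UNIV. g x i j * \<xi> $ i * \<xi> $ j) > 0"
    and a_smooth: "\<And>i. smooth_on U (\<lambda>x. a x i)"
    and v_smooth: "smooth_on U v"
    and C_smooth: "\<And>k i j. smooth_on U (\<lambda>x. C x k i j)"
    and N_smooth: "smooth_on U N"
    and N_nonzero: "\<And>x. x \<in> U \<Longrightarrow> N x \<noteq> 0"
begin

subsection \<open>Euler--Lagrange equations as momentum balance\<close>

lemma EL_solution_lag1_iff:
  assumes I: "open I" and xI: "x ` I \<subseteq> U"
  shows "EL_solution (lag1 g a v) F I x \<longleftrightarrow> (\<forall>t\<in>I. x differentiable at t) \<and>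
    (\<forall>t\<in>I. \<forall>i. ((\<lambda>s. momentum g a (x s) (vector_derivative x (at s)) i) has_real_derivative
       lag1_gradient g a v (x t) (vector_derivative x (at t)) i + F (x t) (vector_derivative x (at t)) i)
       (at t))"
proof -
  have "((\<lambda>s. pdp (lag1 g a v) (x s) (vector_derivative x (at s)) i) has_real_derivative X) (at t)
      \<longleftrightarrow> ((\<lambda>s. momentum g a (x s) (vector_derivative x (at s)) i) has_real_derivative X) (at t)"
    if "t \<in> I" for t i X
    using xI g_sym by (intro has_real_derivative_cong_open[OF I that] pdp_lag1) auto
  moreover have "pdq (lag1 g a v) (x t) w i = lag1_gradient g a v (x t) w i" if "t \<in> I" for t w i
    using xI that by (intro pdq_lag1[OF U_open _ g_smooth a_smooth v_smooth]) auto
  ultimately show ?thesis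
    unfolding EL_solution_def by simp
qed

lemma EL_solution_lag1_momentum:
  assumes "EL_solution (lag1 g a v) F I x" "open I" "x ` I \<subseteq> U" "t \<in> I"
  shows "((\<lambda>s. momentum g a (x s) (vector_derivative x (at s)) i) has_real_derivative
    lag1_gradient g a v (x t) (vector_derivative x (at t)) i + F (x t) (vector_derivative x (at t)) i) (at t)"
  using assms EL_solution_lag1_iff[OF assms(2,3), of F] by blast

lemma lag1_star_rescaled_velocity:
  assumes q: "q \<in> U"
  shows "pdp (lag1_star N g a v) q ((1 / N q) *\<^sub>R w) i = N q * momentum g a q w i"
    and "pdq (lag1_star N g a v) q ((1 / N q) *\<^sub>R w) i
      = lag1_gradient g a v q w i + pd N q i / N q * momentum_pairing g a q w"
  using g_sym[OF q] N_nonzero[OF q]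
  by (simp_all add: pdp_lag1_star
      pdq_lag1_star[OF U_open q g_smooth a_smooth v_smooth N_smooth N_nonzero[OF q]])

lemma momentum_reparametrization:
  assumes \<sigma>: "time_reparametrization I \<sigma> (\<lambda>t. N (x t))" and xI: "x ` I \<subseteq> U"
    and xy: "\<And>t. t \<in> I \<Longrightarrow> y (\<sigma> t) = x t"
    and x_diff: "\<And>t. t \<in> I \<Longrightarrow> x differentiable at t" and t: "t \<in> I"
  shows "((\<lambda>r. pdp (lag1_star N g a v) (y r) (vector_derivative y (at r)) i) has_real_derivative
      pdq (lag1_star N g a v) (y (\<sigma> t)) (vector_derivative y (at (\<sigma> t))) i) (at (\<sigma> t))
    \<longleftrightarrow> ((\<lambda>s. momentum g a (x s) (vector_derivative x (at s)) i) has_real_derivative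
      lag1_gradient g a v (x t) (vector_derivative x (at t)) i
        + reparametrization_force N g a (x t) (vector_derivative x (at t)) i) (at t)"
proof -
  interpret time_reparametrization I \<sigma> "\<lambda>t. N (x t)"
    by (rule \<sigma>)
  define x' where "x' s = vector_derivative x (at s)" for s
  define P where "P s = momentum g a (x s) (x' s) i" for s
  have xU: "x s \<in> U" if "s \<in> I" for s
    using xI that by auto
  have x': "(x has_vector_derivative x' s) (at s)" if "s \<in> I" for s
    unfolding x'_def using x_diff[OF that] vector_derivative_works by blast
  have y': "vector_derivative y (at (\<sigma> s)) = (1 / N (x s)) *\<^sub>R x' s" if s: "s \<in> I" for s
    using has_vector_derivative_iff[where x=x and y=y, OF xy s] x'[OF s] derivative_nonzero[OF s]
    by (intro vector_derivative_at) simp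
  have pdp_y: "pdp (lag1_star N g a v) (y (\<sigma> s)) (vector_derivative y (at (\<sigma> s))) i = N (x s) * P s"
    if s: "s \<in> I" for s
    by (simp add: xy[OF s] y'[OF s] lag1_star_rescaled_velocity(1)[OF xU[OF s]] P_def)
  have pdq_y: "pdq (lag1_star N g a v) (y (\<sigma> t)) (vector_derivative y (at (\<sigma> t))) i
      = lag1_gradient g a v (x t) (x' t) i + pd N (x t) i / N (x t) * momentum_pairing g a (x t) (x' t)"
    by (simp add: xy[OF t] y'[OF t] lag1_star_rescaled_velocity(2)[OF xU[OF t]])
  define Nd where "Nd = (\<Sum>j\<in>UNIV. pd N (x t) j * x' t $ j)"
  have N_deriv: "((\<lambda>s. N (x s)) has_real_derivative Nd) (at t)"
    unfolding Nd_def by (rule has_real_derivative_smooth_on_comp[OF N_smooth U_open xU[OF t] x'[OF t]])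
  have "((\<lambda>r. pdp (lag1_star N g a v) (y r) (vector_derivative y (at r)) i) has_real_derivative Y) (at (\<sigma> t))
      \<longleftrightarrow> (P has_real_derivative (Y * N (x t) - Nd * P t) / N (x t)) (at t)" for Y
    using has_real_derivative_iff[where h="\<lambda>s. N (x s) * P s"
        and k="\<lambda>r. pdp (lag1_star N g a v) (y r) (vector_derivative y (at r)) i", OF pdp_y t]
      has_real_derivative_mult_left_iff[OF N_deriv open_I t derivative_nonzero] by simp
  moreover have "(pdq (lag1_star N g a v) (y (\<sigma> t)) (vector_derivative y (at (\<sigma> t))) i * N (x t)
      - Nd * P t) / N (x t)
    = lag1_gradient g a v (x t) (x' t) i + reparametrization_force N g a (x t) (x' t) i"
    unfolding pdq_y reparametrization_force_def P_def Nd_def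
    using derivative_nonzero[OF t] by (simp add: field_simps)
  ultimately show ?thesis
    unfolding P_def x'_def by simp
qed

lemma EL_solution_lag1_star_iff:
  assumes \<sigma>: "time_reparametrization I \<sigma> (\<lambda>t. N (x t))" and xI: "x ` I \<subseteq> U"
    and xy: "\<And>t. t \<in> I \<Longrightarrow> y (\<sigma> t) = x t"
  shows "EL_solution (lag1_star N g a v) (\<lambda>_ _ _. 0) (\<sigma> ` I) y
    \<longleftrightarrow> EL_solution (lag1 g a v) (reparametrization_force N g a) I x"
proof -
  interpret time_reparametrization I \<sigma> "\<lambda>t. N (x t)"
    by (rule \<sigma>)
  have diff: "(\<forall>r\<in>\<sigma> ` I. y differentiable at r) \<longleftrightarrow> (\<forall>t\<in>I. x differentiable at t)"
    using differentiable_iff[where x=x and y=y, OF xy] by auto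
  show ?thesis
  proof (cases "\<forall>t\<in>I. x differentiable at t")
    case False
    then show ?thesis
      using diff unfolding EL_solution_def by auto
  next
    case True
    have "EL_solution (lag1_star N g a v) (\<lambda>_ _ _. 0) (\<sigma> ` I) y \<longleftrightarrow>
        (\<forall>t\<in>I. \<forall>i. ((\<lambda>r. pdp (lag1_star N g a v) (y r) (vector_derivative y (at r)) i)
          has_real_derivative pdq (lag1_star N g a v) (y (\<sigma> t)) (vector_derivative y (at (\<sigma> t))) i)
          (at (\<sigma> t)))"
      using True diff unfolding EL_solution_def by auto
    also have "\<dots> \<longleftrightarrow> (\<forall>t\<in>I. \<forall>i. ((\<lambda>s. momentum g a (x s) (vector_derivative x (at s)) i)
        has_real_derivative lag1_gradient g a v (x t) (vector_derivative x (at t)) i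
          + reparametrization_force N g a (x t) (vector_derivative x (at t)) i) (at t))"
      using momentum_reparametrization[OF \<sigma> xI xy] True by simp
    also have "\<dots> \<longleftrightarrow> EL_solution (lag1 g a v) (reparametrization_force N g a) I x"
      using EL_solution_lag1_iff[OF open_I xI] True by simp
    finally show ?thesis .
  qed
qed

definition metric_matrix :: "real^'n \<Rightarrow> real^'n^'n" where
  "metric_matrix q = (\<chi> i j. g q i j)"

text \<open>Along a solution of the Euler--Lagrange equations of \<open>l\<^sub>1\<close> with force \<open>gyro_force\<close>,
  \<open>metric_matrix x *v x'' = acceleration_rhs (x, x')\<close>.\<close>

definition acceleration_rhs :: "(real^'n) \<times> (real^'n) \<Rightarrow> real^'n" where
  "acceleration_rhs z = (\<chi> i. lag1_gradient g a v (fst z) (snd z) i + gyro_force C g (fst z) (snd z) i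
      - (\<Sum>j\<in>UNIV. (\<Sum>k\<in>UNIV. pd (\<lambda>x. g x i j) (fst z) k * snd z $ k) * snd z $ j)
      - (\<Sum>k\<in>UNIV. pd (\<lambda>x. a x i) (fst z) k * snd z $ k))"

text \<open>Written by Cramer's rule, the acceleration is a quotient of polynomials in locally Lipschitz
  functions, hence locally Lipschitz.\<close>

definition acceleration :: "(real^'n) \<times> (real^'n) \<Rightarrow> real^'n" where
  "acceleration z = (\<chi> k. det (\<chi> i j. if j = k then acceleration_rhs z $ i else g (fst z) i j)
      / det (metric_matrix (fst z)))"

lemma det_metric_matrix_nonzero:
  assumes q: "q \<in> U"
  shows "det (metric_matrix q) \<noteq> 0"
proof -
  have "\<xi> = 0" if "metric_matrix q *v \<xi> = 0" for \<xi>
  proof (rule ccontr)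
    assume "\<xi> \<noteq> 0"
    have "\<xi> \<bullet> (metric_matrix q *v \<xi>) = (\<Sum>i\<in>UNIV. \<Sum>j\<in>UNIV. g q i j * \<xi> $ i * \<xi> $ j)"
      unfolding metric_matrix_def inner_vec_def matrix_vector_mult_def
      by (simp add: sum_distrib_left mult_ac)
    then show False
      using g_pos[OF q \<open>\<xi> \<noteq> 0\<close>] that by simp
  qed
  then show ?thesis
    by (simp add: invertible_det_nz[symmetric] invertible_left_inverse matrix_left_invertible_ker)
qed

lemma metric_matrix_acceleration:
  assumes "fst z \<in> U"
  shows "metric_matrix (fst z) *v acceleration z = acceleration_rhs z"
proof -
  have "acceleration z = (\<chi> k. det (\<chi> i j. if j = k then acceleration_rhs z $ i
      else metric_matrix (fst z) $ i $ j) / det (metric_matrix (fst z)))"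
    unfolding acceleration_def metric_matrix_def by (simp cong: if_cong)
  then show ?thesis
    using cramer[OF det_metric_matrix_nonzero[OF assms]] by blast
qed

lemma locally_lipschitz_at_smooth_fst:
  fixes z :: "(real^'n) \<times> (real^'n)"
  assumes "smooth_on U f" "fst z \<in> U"
  shows "locally_lipschitz_at z (\<lambda>y. f (fst y))"
  using smooth_on_locally_lipschitz_at[OF assms(1) U_open assms(2)]
  by (rule locally_lipschitz_at_compose) (intro bounded_linear_imp_locally_lipschitz_at bounded_linear_fst)

lemma locally_lipschitz_at_phase_field:
  assumes z: "fst z \<in> U"
  shows "locally_lipschitz_at z (\<lambda>y. (snd y, acceleration y))"
proof -
  note smooth_pd = smooth_on_pd[OF g_smooth U_open] smooth_on_pd[OF a_smooth U_open]
    smooth_on_pd[OF v_smooth U_open]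
  have rhs: "locally_lipschitz_at z (\<lambda>y. acceleration_rhs y $ i)" for i
    unfolding acceleration_rhs_def lag1_gradient_def gyro_force_def vec_lambda_beta
    by (intro locally_lipschitz_at_add locally_lipschitz_at_diff locally_lipschitz_at_mult
        locally_lipschitz_at_sum locally_lipschitz_at_const locally_lipschitz_at_snd_nth
        locally_lipschitz_at_smooth_fst[OF smooth_pd(1) z] locally_lipschitz_at_smooth_fst[OF smooth_pd(2) z]
        locally_lipschitz_at_smooth_fst[OF smooth_pd(3) z] locally_lipschitz_at_smooth_fst[OF g_smooth z]
        locally_lipschitz_at_smooth_fst[OF C_smooth z])
  have entry: "locally_lipschitz_at z (\<lambda>y. g (fst y) i j)" for i j
    by (rule locally_lipschitz_at_smooth_fst[OF g_smooth z])
  have "locally_lipschitz_at z (\<lambda>y. if j = k then acceleration_rhs y $ i else g (fst y) i j)" for i j k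
    by (cases "j = k") (simp_all add: rhs entry)
  then have "locally_lipschitz_at z
      (\<lambda>y. det (\<chi> i j. if j = k then acceleration_rhs y $ i else g (fst y) i j))" for k
    by (intro locally_lipschitz_at_det) simp
  moreover have "locally_lipschitz_at z (\<lambda>y. det (metric_matrix (fst y)))"
    unfolding metric_matrix_def by (intro locally_lipschitz_at_det) (simp add: entry)
  ultimately have "locally_lipschitz_at z (\<lambda>y. acceleration y $ k)" for k
    unfolding acceleration_def vec_lambda_beta
    using det_metric_matrix_nonzero[OF z] by (intro locally_lipschitz_at_divide)
  then have "locally_lipschitz_at z acceleration"
    by (rule locally_lipschitz_at_vec)
  moreover have "locally_lipschitz_at z snd"
    by (intro bounded_linear_imp_locally_lipschitz_at bounded_linear_snd)
  ultimately show ?thesis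
    by (rule locally_lipschitz_at_Pair[rotated])
qed

lemma phase_curve_exists:
  assumes q0: "q0 \<in> U"
  obtains h x w where "h > 0" "x 0 = q0" "w 0 = w0"
    "\<And>t. t \<in> {-h<..<h} \<Longrightarrow> x t \<in> U"
    "\<And>t. t \<in> {-h<..<h} \<Longrightarrow> (x has_vector_derivative w t) (at t)"
    "\<And>t. t \<in> {-h<..<h} \<Longrightarrow> (w has_vector_derivative acceleration (x t, w t)) (at t)"
proof -
  obtain e L where e: "e > 0" and L: "L-lipschitz_on (cball (q0, w0) e) (\<lambda>y. (snd y, acceleration y))"
    using locally_lipschitz_at_phase_field[of "(q0, w0)"] q0 unfolding locally_lipschitz_at_def by auto
  obtain r where r: "r > 0" "cball q0 r \<subseteq> U"
    using U_open q0 open_contains_cball by blast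
  have "min e r > 0"
    using e r by simp
  from picard_lindeloef_local[OF this lipschitz_on_cball_shrink[OF L]]
  obtain h z where h: "h > 0" and z0: "z 0 = (q0, w0)"
    and z: "\<And>t. t \<in> {-h<..<h} \<Longrightarrow> z t \<in> cball (q0, w0) (min e r)
      \<and> (z has_vector_derivative (snd (z t), acceleration (z t))) (at t)"
    by auto
  show ?thesis
  proof (rule that[OF h, of "\<lambda>t. fst (z t)" "\<lambda>t. snd (z t)"])
    fix t assume t: "t \<in> {-h<..<h}"
    have "dist q0 (fst (z t)) \<le> min e r"
      using z[OF t] dist_fst_le[of "(q0, w0)" "z t"] by auto
    then show "fst (z t) \<in> U"
      using r by auto
    show "((\<lambda>t. fst (z t)) has_vector_derivative snd (z t)) (at t)"
      using has_vector_derivative_bounded_linear[OF bounded_linear_fst conjunct2[OF z[OF t]]] by simp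
    show "((\<lambda>t. snd (z t)) has_vector_derivative acceleration (fst (z t), snd (z t))) (at t)"
      using has_vector_derivative_bounded_linear[OF bounded_linear_snd conjunct2[OF z[OF t]]] by simp
  qed (use z0 in simp_all)
qed

lemma phase_curve_solves_EL:
  assumes I: "open I" and xU: "\<And>t. t \<in> I \<Longrightarrow> x t \<in> U"
    and x': "\<And>t. t \<in> I \<Longrightarrow> (x has_vector_derivative w t) (at t)"
    and w': "\<And>t. t \<in> I \<Longrightarrow> (w has_vector_derivative acceleration (x t, w t)) (at t)"
  shows "EL_solution (lag1 g a v) (gyro_force C g) I x"
proof -
  have vd: "vector_derivative x (at s) = w s" if "s \<in> I" for s
    using x'[OF that] by (rule vector_derivative_at)
  have "((\<lambda>s. momentum g a (x s) (w s) i) has_real_derivative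
      lag1_gradient g a v (x t) (w t) i + gyro_force C g (x t) (w t) i) (at t)" if t: "t \<in> I" for t i
  proof -
    have wj: "((\<lambda>s. w s $ j) has_real_derivative acceleration (x t, w t) $ j) (at t)" for j
      using has_vector_derivative_bounded_linear[OF bounded_linear_vec_nth w'[OF t], of j]
      by (simp add: has_real_derivative_iff_has_vector_derivative)
    have "(\<Sum>j\<in>UNIV. acceleration (x t, w t) $ j * g (x t) i j) = acceleration_rhs (x t, w t) $ i"
      using metric_matrix_acceleration[of "(x t, w t)"] xU[OF t]
      by (simp add: metric_matrix_def matrix_vector_mult_def vec_eq_iff mult.commute)
    moreover have "((\<lambda>s. momentum g a (x s) (w s) i) has_real_derivative
        (\<Sum>j\<in>UNIV. (\<Sum>k\<in>UNIV. pd (\<lambda>x. g x i j) (x t) k * w t $ k) * w t $ j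
          + acceleration (x t, w t) $ j * g (x t) i j)
        + (\<Sum>k\<in>UNIV. pd (\<lambda>x. a x i) (x t) k * w t $ k)) (at t)"
      unfolding momentum_def
      by (intro DERIV_add DERIV_sum DERIV_mult wj
          has_real_derivative_smooth_on_comp[OF g_smooth U_open xU[OF t] x'[OF t]]
          has_real_derivative_smooth_on_comp[OF a_smooth U_open xU[OF t] x'[OF t]])
    ultimately show ?thesis
      by (simp add: acceleration_rhs_def sum.distrib)
  qed
  then have "((\<lambda>s. momentum g a (x s) (vector_derivative x (at s)) i) has_real_derivative
      lag1_gradient g a v (x t) (vector_derivative x (at t)) i
        + gyro_force C g (x t) (vector_derivative x (at t)) i) (at t)" if t: "t \<in> I" for t i
    using has_real_derivative_cong_open[OF I t, of "\<lambda>s. momentum g a (x s) (vector_derivative x (at s)) i"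
        "\<lambda>s. momentum g a (x s) (w s) i"] vd t by simp
  moreover have "x differentiable at t" if "t \<in> I" for t
    using x'[OF that] by (rule differentiableI_vector)
  moreover have "x ` I \<subseteq> U"
    using xU by auto
  ultimately show ?thesis
    using EL_solution_lag1_iff[OF I] by blast
qed

lemma EL_solution_exists:
  assumes q0: "q0 \<in> U"
  obtains h x where "h > 0" "x 0 = q0" "vector_derivative x (at 0) = w0" "x ` {-h<..<h} \<subseteq> U"
    "EL_solution (lag1 g a v) (gyro_force C g) {-h<..<h} x"
proof -
  obtain h x w where h: "h > 0" and "x 0 = q0" "w 0 = w0"
    and xU: "\<And>t. t \<in> {-h<..<h} \<Longrightarrow> x t \<in> U"
    and x': "\<And>t. t \<in> {-h<..<h} \<Longrightarrow> (x has_vector_derivative w t) (at t)"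
    and w': "\<And>t. t \<in> {-h<..<h} \<Longrightarrow> (w has_vector_derivative acceleration (x t, w t)) (at t)"
    using phase_curve_exists[OF q0] by blast
  moreover have "vector_derivative x (at 0) = w 0"
    using x'[of 0] h by (intro vector_derivative_at) auto
  moreover have "EL_solution (lag1 g a v) (gyro_force C g) {-h<..<h} x"
    using xU x' w' by (intro phase_curve_solves_EL) auto
  ultimately show ?thesis
    using that xU by blast
qed

lemma forces_agree_imp_becomes:
  assumes "\<And>q w i. q \<in> U \<Longrightarrow> gyro_force C g q w i = reparametrization_force N g a q w i"
  shows "becomes U N (lag1 g a v) (gyro_force C g) (lag1_star N g a v)"
  unfolding becomes_def
proof (intro allI impI, elim conjE)
  fix I x \<sigma> and y :: "real \<Rightarrow> real^'n"
  assume I: "is_interval I" "open I" and xI: "x ` I \<subseteq> U"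
    and \<sigma>: "\<forall>t\<in>I. (\<sigma> has_real_derivative N (x t)) (at t)" and xy: "\<forall>t\<in>I. y (\<sigma> t) = x t"
  have "time_reparametrization I \<sigma> (\<lambda>t. N (x t))"
    using I xI \<sigma> N_nonzero by unfold_locales auto
  then have "EL_solution (lag1_star N g a v) (\<lambda>_ _ _. 0) (\<sigma> ` I) y
      \<longleftrightarrow> EL_solution (lag1 g a v) (reparametrization_force N g a) I x"
    using xy by (intro EL_solution_lag1_star_iff[OF _ xI]) auto
  then show "EL_solution (lag1 g a v) (gyro_force C g) I x
      \<longleftrightarrow> EL_solution (lag1_star N g a v) (\<lambda>_ _ _. 0) (\<sigma> ` I) y"
    using EL_solution_force_cong[OF xI assms] by simp
qed

lemma exists_time_reparametrization:
  assumes x_diff: "\<forall>t\<in>J. x differentiable at t" and xU: "x ` J \<subseteq> U" and t01: "{t0..t1} \<subseteq> J"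
  obtains \<sigma> where "time_reparametrization {t0<..<t1} \<sigma> (\<lambda>t. N (x t))"
proof -
  have "continuous_on {t0..t1} x"
    using x_diff t01 by (meson continuous_at_imp_continuous_on differentiable_imp_continuous_within subsetD)
  moreover have xU': "x ` {t0..t1} \<subseteq> U"
    using xU t01 by blast
  ultimately have "continuous_on {t0..t1} (\<lambda>s. N (x s))"
    by (rule continuous_on_compose2[OF smooth_on_continuous_on[OF N_smooth U_open]])
  from exists_antiderivative[OF this]
  obtain \<sigma> where "\<forall>t\<in>{t0<..<t1}. (\<sigma> has_real_derivative N (x t)) (at t)"
    by blast
  moreover have "N (x t) \<noteq> 0" if "t \<in> {t0<..<t1}" for t
    using that xU' N_nonzero by (auto simp: image_subset_iff)
  ultimately have "time_reparametrization {t0<..<t1} \<sigma> (\<lambda>t. N (x t))"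
    by unfold_locales (auto simp: is_interval_1)
  then show ?thesis
    by (rule that)
qed

lemma becomes_imp_forces_agree:
  assumes becomes: "becomes U N (lag1 g a v) (gyro_force C g) (lag1_star N g a v)" and q0: "q0 \<in> U"
  shows "gyro_force C g q0 w0 i = reparametrization_force N g a q0 w0 i"
proof -
  obtain h x where h: "h > 0" and x0: "x 0 = q0" "vector_derivative x (at 0) = w0"
    and xU: "x ` {-h<..<h} \<subseteq> U" and EL: "EL_solution (lag1 g a v) (gyro_force C g) {-h<..<h} x"
    using EL_solution_exists[OF q0] .
  define I where "I = {-h/2<..<h/2}"
  have I: "0 \<in> I" "I \<subseteq> {-h<..<h}" "{-h/2..h/2} \<subseteq> {-h<..<h}"
    unfolding I_def using h by auto
  have xI: "x ` I \<subseteq> U"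
    using xU I by auto
  have "\<forall>t\<in>{-h<..<h}. x differentiable at t"
    using EL unfolding EL_solution_def by (rule conjunct1)
  from exists_time_reparametrization[OF this xU I(3)]
  obtain \<sigma> where \<sigma>: "time_reparametrization I \<sigma> (\<lambda>t. N (x t))"
    unfolding I_def .
  interpret time_reparametrization I \<sigma> "\<lambda>t. N (x t)"
    by (rule \<sigma>)
  define y where "y r = x (inv_into I \<sigma> r)" for r
  have xy: "y (\<sigma> t) = x t" if "t \<in> I" for t
    unfolding y_def using inj_on that by simp
  have EL_gyro: "EL_solution (lag1 g a v) (gyro_force C g) I x"
    using EL I(2) by (rule EL_solution_subset)
  have "is_interval I \<and> open I \<and> x ` I \<subseteq> U \<and> (\<forall>t\<in>I. (\<sigma> has_real_derivative N (x t)) (at t))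
      \<and> (\<forall>t\<in>I. y (\<sigma> t) = x t)"
    using interval_I open_I xI has_derivative xy by blast
  then have "EL_solution (lag1 g a v) (gyro_force C g) I x
      \<longleftrightarrow> EL_solution (lag1_star N g a v) (\<lambda>_ _ _. 0) (\<sigma> ` I) y"
    by (rule becomes[unfolded becomes_def, rule_format])
  also have "\<dots> \<longleftrightarrow> EL_solution (lag1 g a v) (reparametrization_force N g a) I x"
    using xy by (intro EL_solution_lag1_star_iff[OF \<sigma> xI]) auto
  finally have EL_reparam: "EL_solution (lag1 g a v) (reparametrization_force N g a) I x"
    using EL_gyro by simp
  show ?thesis
    using DERIV_unique[OF EL_solution_lag1_momentum[OF EL_gyro open_I xI I(1)]
        EL_solution_lag1_momentum[OF EL_reparam open_I xI I(1)]] x0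
    by simp
qed

theorem becomes_iff_forces_agree:
  "becomes U N (lag1 g a v) (gyro_force C g) (lag1_star N g a v)
    \<longleftrightarrow> (\<forall>q\<in>U. \<forall>w i. gyro_force C g q w i = reparametrization_force N g a q w i)"
  using forces_agree_imp_becomes becomes_imp_forces_agree by blast

end

section \<open>Splitting off the linear term\<close>

lemma gyro_force_uminus: "gyro_force C g q (- w) i = gyro_force C g q w i"
  by (simp add: gyro_force_def)

lemma reparametrization_force_quadratic_uminus:
  "reparametrization_force N g (\<lambda>_ _. 0) q (- w) i = reparametrization_force N g (\<lambda>_ _. 0) q w i"
  by (simp add: reparametrization_force_def momentum_def momentum_pairing_def sum_negf)

lemma momentum_split: "momentum g a q w i = momentum g (\<lambda>_ _. 0) q w i + a q i"
  by (simp add: momentum_def)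

lemma momentum_pairing_split:
  "momentum_pairing g a q w = momentum_pairing g (\<lambda>_ _. 0) q w + (\<Sum>j\<in>UNIV. a q j * w $ j)"
  by (simp add: momentum_pairing_def)

lemma reparametrization_force_split:
  assumes "N q \<noteq> 0"
  shows "reparametrization_force N g a q w i = reparametrization_force N g (\<lambda>_ _. 0) q w i
    + (\<Sum>j\<in>UNIV. (pd N q i * a q j - pd N q j * a q i) * w $ j) / N q"
  using assms
  unfolding reparametrization_force_def momentum_split[of g a] momentum_pairing_split[of g a]
  by (simp add: field_simps sum_subtractf sum_distrib_left sum_distrib_right sum.distrib)

lemma linear_form_eq_zero_iff:
  "(\<forall>w::real^'n. (\<Sum>j\<in>UNIV. c j * w $ j) = 0) \<longleftrightarrow> (\<forall>j. c j = 0)"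
proof
  assume "\<forall>w::real^'n. (\<Sum>j\<in>UNIV. c j * w $ j) = 0"
  then have "(\<Sum>j\<in>UNIV. axis k (1::real) $ j * c j) = 0" for k
    by (simp add: mult.commute)
  then show "\<forall>j. c j = 0"
    by (simp add: sum_axis_mult)
qed simp

lemma gyro_force_eq_reparametrization_force_iff:
  fixes q :: "real^'n"
  assumes N: "N q \<noteq> 0"
  shows "(\<forall>w i. gyro_force C g q w i = reparametrization_force N g a q w i) \<longleftrightarrow>
    (\<forall>w i. gyro_force C g q w i = reparametrization_force N g (\<lambda>_ _. 0) q w i)
      \<and> (\<forall>i j. a q j * pd N q i = a q i * pd N q j)"
proof -
  define E where "E w i = gyro_force C g q w i - reparametrization_force N g (\<lambda>_ _. 0) q w i"
    for w i
  define c where "c i j = pd N q i * a q j - pd N q j * a q i" for i j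
  define L where "L w i = (\<Sum>j\<in>UNIV. c i j * w $ j) / N q" for w :: "real^'n" and i
  have E_even: "E (- w) i = E w i" for w i
    unfolding E_def by (simp add: gyro_force_uminus reparametrization_force_quadratic_uminus)
  have L_odd: "L (- w) i = - L w i" for w i
    unfolding L_def by (simp add: sum_negf)
  have split: "gyro_force C g q w i = reparametrization_force N g a q w i \<longleftrightarrow> E w i = L w i" for w i
    using reparametrization_force_split[of N q g a w i, OF N] unfolding E_def L_def c_def by linarith
  have "E w i = 0 \<and> L w i = 0" if "\<forall>w i. E w i = L w i" for w i
    using that[rule_format, of w i] that[rule_format, of "- w" i] E_even[of w i] L_odd[of w i]
    by linarith
  then have even_odd: "(\<forall>w i. E w i = L w i) \<longleftrightarrow> (\<forall>w i. E w i = 0) \<and> (\<forall>w i. L w i = 0)"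
    by auto
  have "(\<forall>w i. L w i = 0) \<longleftrightarrow> (\<forall>i. \<forall>w::real^'n. (\<Sum>j\<in>UNIV. c i j * w $ j) = 0)"
    unfolding L_def using N by auto
  also have "\<dots> \<longleftrightarrow> (\<forall>i j. a q j * pd N q i = a q i * pd N q j)"
    unfolding linear_form_eq_zero_iff c_def by (simp add: mult.commute)
  finally have L_zero: "(\<forall>w i. L w i = 0) \<longleftrightarrow> (\<forall>i j. a q j * pd N q i = a q i * pd N q j)" .
  have E_zero: "(\<forall>w i. E w i = 0)
      \<longleftrightarrow> (\<forall>w i. gyro_force C g q w i = reparametrization_force N g (\<lambda>_ _. 0) q w i)"
    unfolding E_def by simp
  have "(\<forall>w i. gyro_force C g q w i = reparametrization_force N g a q w i) \<longleftrightarrow> (\<forall>w i. E w i = L w i)"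
    by (simp only: split)
  then show ?thesis
    unfolding even_odd E_zero L_zero .
qed

theorem proposition5p1:
  fixes U :: "(real^'n) set"
    and g :: "real^'n \<Rightarrow> 'n \<Rightarrow> 'n \<Rightarrow> real"
    and a :: "real^'n \<Rightarrow> 'n \<Rightarrow> real"
    and v :: "real^'n \<Rightarrow> real"
    and C :: "real^'n \<Rightarrow> 'n \<Rightarrow> 'n \<Rightarrow> 'n \<Rightarrow> real"
    and N :: "real^'n \<Rightarrow> real"
  assumes U_open: "open U"
    and g_smooth: "\<And>i j. smooth_on U (\<lambda>x. g x i j)"
    and g_sym: "\<And>x i j. x \<in> U \<Longrightarrow> g x i j = g x j i"
    and g_pos: "\<And>x \<xi>. x \<in> U \<Longrightarrow> \<xi> \<noteq> 0 \<Longrightarrow> (\<Sum>i\<in>UNIV. \<Sum>j\<in>UNIV. g x i j * \<xi> $ i * \<xi> $ j) > 0"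
    and a_smooth: "\<And>i. smooth_on U (\<lambda>x. a x i)"
    and v_smooth: "smooth_on U v"
    and C_smooth: "\<And>k i j. smooth_on U (\<lambda>x. C x k i j)"
    and C_skew: "\<And>x k i j. x \<in> U \<Longrightarrow> C x k i j = - C x k j i"
    and N_smooth: "smooth_on U N"
    and N_nonzero: "\<And>x. x \<in> U \<Longrightarrow> N x \<noteq> 0"
  shows "becomes U N (lag1 g a v) (gyro_force C g) (lag1_star N g a v)
         \<longleftrightarrow> chaplygin_multiplier U g v C N
             \<and> (\<forall>x\<in>U. \<forall>i j. a x j * pd N x i = a x i * pd N x j)"
proof -
  interpret with_a: gyroscopic_system U g a v C N
    by unfold_locales (use assms in auto)
  interpret without_a: gyroscopic_system U g "\<lambda>_ _. 0" v C N
    by unfold_locales (use assms smooth_on_const in auto)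
  have "(\<forall>w i. gyro_force C g q w i = reparametrization_force N g a q w i) \<longleftrightarrow>
      (\<forall>w i. gyro_force C g q w i = reparametrization_force N g (\<lambda>_ _. 0) q w i)
        \<and> (\<forall>i j. a q j * pd N q i = a q i * pd N q j)" if "q \<in> U" for q
    using N_nonzero[OF that] by (rule gyro_force_eq_reparametrization_force_iff)
  then have "(\<forall>q\<in>U. \<forall>w i. gyro_force C g q w i = reparametrization_force N g a q w i) \<longleftrightarrow>
      (\<forall>q\<in>U. (\<forall>w i. gyro_force C g q w i = reparametrization_force N g (\<lambda>_ _. 0) q w i)
        \<and> (\<forall>i j. a q j * pd N q i = a q i * pd N q j))"
    by (rule ball_cong[OF refl])
  then show ?thesis
    unfolding chaplygin_multiplier_def with_a.becomes_iff_forces_agree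
      without_a.becomes_iff_forces_agree ball_conj_distrib .
qed

end
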